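(* For any $\mathcal{E}\in(0,1)$, any $c\in\mathbb{R}$, and any real $u\in H^2(\mathbb{R})$ such that $u(x)=0$ whenever $u_0'(x)=0$, we have $$\langle K_+(c)u,u\rangle_{L^2}=\|w_x\|^2_{L^2}+(3-c)\|w\|^2_{L^2}+2\mathcal{E}^2\Big\|\frac{u_0w}{u_0'}\Big\|^2_{L^2},$$ where $w=u_x-\frac{u_0''}{u_0'}u\in H^1(\mathbb{R})$ satisfies $\frac{w}{u_0'}\in L^2(\mathbb{R})$.
   Context: For $\mathcal{E}\in(0,1)$, $u_0(x)=\sqrt{1-\mathcal{E}}\,\mathrm{sn}\big(x\sqrt{(1+\mathcal{E})/2},\,k\big)$ with $k=\sqrt{(1-\mathcal{E})/(1+\mathcal{E})}$ (Jacobi elliptic function of modulus $k$); it satisfies $u_0''+(1-u_0^2)u_0=0$ and $(u_0')^2=\frac12[(1-u_0^2)^2-\mathcal{E}^2]$. Define $L_+u=-u''+(3u_0^2-1)u$, $M_+u=u''''-5(u_0^2u')'+(-5u_0^4+15u_0^2-4+3\mathcal{E}^2)u$, $K_+(c)=M_+-cL_+$, with quadratic form $\langle K_+(c)u,u\rangle_{L^2}=\int[u_{xx}^2+5u_0^2u_x^2+(-5u_0^4+15u_0^2-4+3\mathcal{E}^2)u^2]-c\int[u_x^2+(3u_0^2-1)u^2]$ on $H^2(\mathbb{R})$. *)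

theory Defs
  imports "HOL-Analysis.Analysis"
begin

definition sint :: "(real \<Rightarrow> real) \<Rightarrow> real \<Rightarrow> real \<Rightarrow> real" where
  "sint f a b = (if a \<le> b then integral {a..b} f else - integral {b..a} f)"

definition ellipticF :: "real \<Rightarrow> real \<Rightarrow> real" where
  "ellipticF k phi = sint (\<lambda>\<theta>. 1 / sqrt (1 - k\<^sup>2 * (sin \<theta>)\<^sup>2)) 0 phi"

definition jacobi_am :: "real \<Rightarrow> real \<Rightarrow> real" where
  "jacobi_am k x = (THE phi. ellipticF k phi = x)"

definition jacobi_sn :: "real \<Rightarrow> real \<Rightarrow> real" where
  "jacobi_sn k x = sin (jacobi_am k x)"

definition u0 :: "real \<Rightarrow> real \<Rightarrow> real" where
  "u0 E x = sqrt (1 - E) * jacobi_sn (sqrt ((1 - E) / (1 + E))) (x * sqrt ((1 + E) / 2))"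

definition square_integrable :: "(real \<Rightarrow> real) \<Rightarrow> bool" where
  "square_integrable f \<longleftrightarrow> f measurable_on UNIV \<and> (\<lambda>x. (f x)\<^sup>2) integrable_on UNIV"

text \<open>w is (the continuous representative of) an H1 function with weak derivative w1.\<close>
definition H1_with_deriv :: "(real \<Rightarrow> real) \<Rightarrow> (real \<Rightarrow> real) \<Rightarrow> bool" where
  "H1_with_deriv w w1 \<longleftrightarrow> continuous_on UNIV w
     \<and> (\<forall>a b. a \<le> b \<longrightarrow> (w1 has_integral (w b - w a)) {a..b})
     \<and> square_integrable w \<and> square_integrable w1"

text \<open>u is (the C1 representative of) an H2 function with derivative u1 and
  weak second derivative u2.\<close>
definition H2_with_derivs :: "(real \<Rightarrow> real) \<Rightarrow> (real \<Rightarrow> real) \<Rightarrow> (real \<Rightarrow> real) \<Rightarrow> bool" where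
  "H2_with_derivs u u1 u2 \<longleftrightarrow> (\<forall>x. (u has_real_derivative u1 x) (at x))
     \<and> square_integrable u \<and> H1_with_deriv u1 u2"

text \<open>The quadratic form of K+(c) = M+ - c L+.\<close>
definition Kplus_form :: "real \<Rightarrow> real \<Rightarrow> (real \<Rightarrow> real) \<Rightarrow> (real \<Rightarrow> real) \<Rightarrow> (real \<Rightarrow> real) \<Rightarrow> real" where
  "Kplus_form E c u u1 u2 =
     integral UNIV (\<lambda>x. (u2 x)\<^sup>2 + 5 * (u0 E x)\<^sup>2 * (u1 x)\<^sup>2
        + (- 5 * (u0 E x)^4 + 15 * (u0 E x)\<^sup>2 - 4 + 3 * E\<^sup>2) * (u x)\<^sup>2)
     - c * integral UNIV (\<lambda>x. (u1 x)\<^sup>2 + (3 * (u0 E x)\<^sup>2 - 1) * (u x)\<^sup>2)"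

end

theory Submission
  imports Defs
begin

text \<open>Between consecutive zeros of \<open>u0'\<close> (all of them simple, and \<open>u\<close> vanishes there) the
  integrand of \<open>\<langle>M\<^sub>+u, u\<rangle>\<close> differs from \<open>w\<^sub>x\<^sup>2 + 3 w\<^sup>2 + 2 E\<^sup>2 (u0 w / u0')\<^sup>2\<close> by the
  derivative of \<open>(1/2) C u\<^sup>2 - 2 (3 u0\<^sup>2 - 1) u w - q w\<^sup>2\<close>, where \<open>q = u0'' / u0'\<close> and
  \<open>C = 12 u0 u0' - 10 u0\<^sup>2 q\<close>, and the
  integrand of \<open>\<langle>L\<^sub>+u, u\<rangle>\<close> differs from \<open>w\<^sup>2\<close> by the derivative of \<open>- q u\<^sup>2\<close>. Both identities
  only use \<open>u0'' = - (1 - u0\<^sup>2) u0\<close> and \<open>2 u0'\<^sup>2 = (1 - u0\<^sup>2)\<^sup>2 - E\<^sup>2\<close>, which turns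
  \<open>E\<^sup>2 u0\<^sup>2 / u0'\<^sup>2\<close> into \<open>q\<^sup>2 - 2 u0\<^sup>2\<close>.

  The boundary terms vanish at a zero \<open>z\<close> of \<open>u0'\<close>: \<open>u = O(|y - z|)\<close>, while \<open>u0' w\<close> is the
  Wronskian \<open>u0' u' - u0'' u = \<integral>\<^sub>z\<^sup>y u0' (u'' - (3 u0\<^sup>2 - 1) u)\<close>, so Cauchy-Schwarz gives
  \<open>w = o(1)\<close> and \<open>q w\<^sup>2 = o(1)\<close>. Monotone convergence (the new integrands are nonnegative)
  gives the identities on each interval, and again on the increasing unions of intervals.
  Finally \<open>w / u0' \<in> L\<^sup>2\<close> because \<open>u0\<close> is bounded away from zero where \<open>u0'\<close> is small.\<close>

lemma sint_has_real_derivative: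
  fixes f :: "real \<Rightarrow> real"
  assumes cf: "continuous_on UNIV f"
  shows "((\<lambda>y. sint f 0 y) has_real_derivative f x) (at x)"
proof -
  define R where "R = \<bar>x\<bar> + 1"
  define G where "G y = integral {-R..y} f" for y
  have R: "R > 0" "-R < x" "x < R" unfolding R_def by auto
  have int: "f integrable_on {c..d}" for c d
    by (rule integrable_continuous_real) (rule continuous_on_subset[OF cf], auto)
  have eq: "sint f 0 y = G y - G 0" if "-R \<le> y" for y
  proof (cases "0 \<le> y")
    case True
    have "integral {-R..0} f + integral {0..y} f = integral {-R..y} f"
      by (rule Henstock_Kurzweil_Integration.integral_combine) (use True R in \<open>auto intro: int\<close>)
    then show ?thesis using True unfolding sint_def G_def by auto
  next
    case False
    have "integral {-R..y} f + integral {y..0} f = integral {-R..0} f"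
      by (rule Henstock_Kurzweil_Integration.integral_combine) (use False that in \<open>auto intro: int\<close>)
    then show ?thesis using False unfolding sint_def G_def by auto
  qed
  have "(G has_real_derivative f x) (at x within {-R..R})"
    unfolding G_def
    by (rule integral_has_real_derivative) (use R in \<open>auto intro: continuous_on_subset[OF cf]\<close>)
  then have "(G has_real_derivative f x) (at x)"
    using R by (subst (asm) at_within_interior[of x]) auto
  then have d: "((\<lambda>y. G y - G 0) has_real_derivative f x) (at x)"
    by (auto intro!: derivative_eq_intros)
  show ?thesis
  proof (rule has_field_derivative_transform_within_open[OF d, of "{-R<..}"])
    show "\<And>z. z \<in> {-R<..} \<Longrightarrow> G z - G 0 = sint f 0 z" using eq by auto
  qed (use R in auto)
qed

lemma continuous_imp_borel_measurable_lebesgue: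
  "continuous_on UNIV (f::real \<Rightarrow> real) \<Longrightarrow> f \<in> borel_measurable lebesgue"
  using continuous_imp_measurable_on_sets_lebesgue[of UNIV f] by (simp add: lebesgue_on_UNIV_eq)

lemma measurable_on_UNIV_iff_borel_measurable:
  "(f::real \<Rightarrow> real) measurable_on UNIV \<longleftrightarrow> f \<in> borel_measurable lebesgue"
  using measurable_on_iff_borel_measurable[of UNIV f] by (simp add: lebesgue_on_UNIV_eq)

lemma absolutely_integrable_if_abs_le:
  fixes f g :: "real \<Rightarrow> real"
  assumes "f \<in> borel_measurable lebesgue" "g integrable_on S" "S \<in> sets lebesgue"
    and "\<And>x. x \<in> S \<Longrightarrow> \<bar>f x\<bar> \<le> g x"
  shows "f absolutely_integrable_on S"
  by (rule measurable_bounded_by_integrable_imp_absolutely_integrable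
      [OF measurable_restrict_space1[OF assms(1)] assms(3,2)]) (use assms(4) in auto)

lemma square_integrable_on_imp_absolutely_integrable:
  fixes f :: "real \<Rightarrow> real"
  assumes "f \<in> borel_measurable lebesgue" and "(\<lambda>x. (f x)\<^sup>2) integrable_on {a..b}"
  shows "f absolutely_integrable_on {a..b}"
proof (rule absolutely_integrable_if_abs_le[OF assms(1)])
  show "(\<lambda>x. 1 / 2 * (1 + (f x)\<^sup>2)) integrable_on {a..b}"
    using integrable_add[OF integrable_const_ivl[of 1 a b] assms(2)] by (intro integrable_on_mult_right) auto
  fix x
  have "0 \<le> (\<bar>f x\<bar> - 1)\<^sup>2" by simp
  then show "\<bar>f x\<bar> \<le> 1 / 2 * (1 + (f x)\<^sup>2)"
    by (simp add: power2_eq_square algebra_simps)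
qed auto

lemma absolutely_integrable_bounded_mult_square:
  fixes f c :: "real \<Rightarrow> real"
  assumes "(\<lambda>x. (f x)\<^sup>2) integrable_on UNIV" "c \<in> borel_measurable lebesgue" "\<And>x. \<bar>c x\<bar> \<le> M"
  shows "(\<lambda>x. c x * (f x)\<^sup>2) absolutely_integrable_on UNIV"
proof (rule absolutely_integrable_bounded_measurable_product_real)
  show "c \<in> borel_measurable (lebesgue_on UNIV)" using assms(2) by (simp add: lebesgue_on_UNIV_eq)
  show "bounded (c ` UNIV)" using assms(3) by (auto simp: bounded_iff)
  show "(\<lambda>x. (f x)\<^sup>2) absolutely_integrable_on UNIV"
    using assms(1) by (rule nonnegative_absolutely_integrable_1) simp
qed auto

lemma absolutely_integrable_mult_continuous:
  fixes f G :: "real \<Rightarrow> real"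
  assumes "f absolutely_integrable_on {a..b}" "continuous_on {a..b} G"
  shows "(\<lambda>x. f x * G x) absolutely_integrable_on {a..b}"
proof -
  have "(\<lambda>x. G x * f x) absolutely_integrable_on {a..b}"
  proof (rule absolutely_integrable_bounded_measurable_product_real)
    show "G \<in> borel_measurable (lebesgue_on {a..b})"
      using assms(2) by (rule continuous_imp_measurable_on_sets_lebesgue) simp
    show "bounded (G ` {a..b})"
      using assms(2) compact_continuous_image compact_imp_bounded by blast
  qed (use assms in auto)
  then show ?thesis by (simp add: mult.commute)
qed

lemma integral_abs_square_le:
  fixes f :: "real \<Rightarrow> real"
  assumes ab: "a \<le> b" and fi: "f absolutely_integrable_on {a..b}"
    and f2: "(\<lambda>x. (f x)\<^sup>2) integrable_on {a..b}"
  shows "(integral {a..b} (\<lambda>x. \<bar>f x\<bar>))\<^sup>2 \<le> (b - a) * integral {a..b} (\<lambda>x. (f x)\<^sup>2)"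
proof (cases "a = b")
  case True then show ?thesis by simp
next
  case False
  define J where "J = integral {a..b} (\<lambda>x. \<bar>f x\<bar>)"
  define S where "S = integral {a..b} (\<lambda>x. (f x)\<^sup>2)"
  define L where "L = b - a"
  have L: "L > 0" using ab False unfolding L_def by auto
  define c where "c = J / L"
  have ai: "(\<lambda>x. \<bar>f x\<bar>) integrable_on {a..b}" using fi unfolding absolutely_integrable_on_def by simp
  have le: "integral {a..b} (\<lambda>x. 2 * c * \<bar>f x\<bar>) \<le> integral {a..b} (\<lambda>x. c\<^sup>2 + (f x)\<^sup>2)"
  proof (rule integral_le)
    show "(\<lambda>x. 2 * c * \<bar>f x\<bar>) integrable_on {a..b}" using ai by (rule integrable_on_mult_right)
    show "(\<lambda>x. c\<^sup>2 + (f x)\<^sup>2) integrable_on {a..b}" using integrable_add[OF integrable_const_ivl f2] .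
    fix x have "0 \<le> (\<bar>f x\<bar> - c)\<^sup>2" by simp
    then show "2 * c * \<bar>f x\<bar> \<le> c\<^sup>2 + (f x)\<^sup>2" by (simp add: power2_eq_square algebra_simps)
  qed
  have e1: "integral {a..b} (\<lambda>x. 2 * c * \<bar>f x\<bar>) = 2 * c * J" unfolding J_def by (rule integral_mult_right)
  have e2: "integral {a..b} (\<lambda>x. c\<^sup>2 + (f x)\<^sup>2) = c\<^sup>2 * L + S"
    unfolding S_def L_def using integral_add[OF integrable_const_ivl f2] ab by (simp add: mult.commute)
  have "2 * c * J \<le> c\<^sup>2 * L + S" using le unfolding e1 e2 .
  then have "J * J \<le> L * S" unfolding c_def using L by (simp add: power2_eq_square field_simps)
  then show ?thesis unfolding J_def[symmetric] S_def[symmetric] L_def[symmetric] by (simp add: power2_eq_square)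
qed

lemma integral_shrinking_interval_tendsto_0:
  fixes f :: "real \<Rightarrow> real"
  assumes fi: "\<And>c d. f integrable_on {c..d}"
  shows "((\<lambda>y. integral {min z y..max z y} f) \<longlongrightarrow> 0) (at z)"
proof -
  define G where "G t = integral {z - 1..t} f" for t
  have "continuous_on {z - 1..z + 1} G" unfolding G_def by (rule indefinite_integral_continuous_1) (rule fi)
  then have "continuous (at z) G" by (rule continuous_on_interior) simp
  then have "((\<lambda>y. G y - G z) \<longlongrightarrow> G z - G z) (at z)" by (intro tendsto_intros) (simp add: continuous_at)
  then have lim: "((\<lambda>y. \<bar>G y - G z\<bar>) \<longlongrightarrow> 0) (at z)" using tendsto_rabs_zero by force
  have "eventually (\<lambda>y. norm (integral {min z y..max z y} f) \<le> \<bar>G y - G z\<bar>) (at z)"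
    unfolding eventually_at
  proof (intro exI[of _ 1] conjI ballI impI)
    fix y :: real assume y: "y \<noteq> z \<and> dist y z < 1"
    show "norm (integral {min z y..max z y} f) \<le> \<bar>G y - G z\<bar>"
    proof (cases "z \<le> y")
      case True
      have "integral {z - 1..z} f + integral {z..y} f = integral {z - 1..y} f"
        by (rule Henstock_Kurzweil_Integration.integral_combine) (use True in \<open>auto intro: fi\<close>)
      then show ?thesis using True unfolding G_def by auto
    next
      case False
      have "integral {z - 1..y} f + integral {y..z} f = integral {z - 1..z} f"
        using y False by (intro Henstock_Kurzweil_Integration.integral_combine) (auto simp: dist_real_def intro: fi)
      then show ?thesis using False unfolding G_def by auto
    qed
  qed simp
  then show ?thesis by (rule Lim_null_comparison[OF _ lim])
qed

lemma abs_mult_le_mult: "\<bar>x\<bar> \<le> (X::real) \<Longrightarrow> \<bar>y\<bar> \<le> Y \<Longrightarrow> \<bar>x * y\<bar> \<le> X * Y"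
  unfolding abs_mult by (rule mult_mono) auto

lemma has_integral_increasing_intervals:
  fixes f :: "real \<Rightarrow> real" and \<alpha> \<beta> I :: "nat \<Rightarrow> real"
  assumes fI: "\<And>k. (f has_integral I k) {\<alpha> k..\<beta> k}"
    and inside: "\<And>k. z < \<alpha> k" "\<And>k. \<beta> k < z'"
    and mono: "\<And>k. \<alpha> (Suc k) \<le> \<alpha> k" "\<And>k. \<beta> k \<le> \<beta> (Suc k)"
    and lim: "\<alpha> \<longlonglongrightarrow> z" "\<beta> \<longlonglongrightarrow> z'" "I \<longlonglongrightarrow> L"
    and f0: "\<And>x. z < x \<Longrightarrow> x < z' \<Longrightarrow> 0 \<le> f x"
  shows "(f has_integral L) {z..z'}"
proof -
  define F where "F k x = (if x \<in> {\<alpha> k..\<beta> k} then f x else 0)" for k x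
  define f' where "f' x = (if x \<in> {z<..<z'} then f x else 0)" for x
  have FI: "(F k has_integral I k) {z..z'}" for k
  proof -
    have "(F k has_integral I k) {\<alpha> k..\<beta> k}"
      using fI[of k] by (rule has_integral_eq[rotated]) (simp add: F_def)
    then show ?thesis
      by (rule has_integral_on_superset) (use inside[of k] in \<open>auto simp: F_def\<close>)
  qed
  have F_mono: "F k x \<le> F (Suc k) x" if "x \<in> {z..z'}" for k x
    using mono[of k] f0 inside[of "Suc k"] unfolding F_def by auto
  have conv: "(\<lambda>k. F k x) \<longlonglongrightarrow> f' x" if "x \<in> {z..z'}" for x
  proof (cases "x \<in> {z<..<z'}")
    case True
    have "eventually (\<lambda>k. \<alpha> k < x) sequentially" using order_tendstoD(2)[OF lim(1)] True by auto
    moreover have "eventually (\<lambda>k. x < \<beta> k) sequentially" using order_tendstoD(1)[OF lim(2)] True by auto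
    ultimately have "eventually (\<lambda>k. F k x = f' x) sequentially"
      by eventually_elim (use True in \<open>auto simp: F_def f'_def\<close>)
    then show ?thesis by (rule tendsto_eventually)
  next
    case False
    then have "F k x = 0" "f' x = 0" for k unfolding F_def f'_def using that inside[of k] by auto
    then show ?thesis by simp
  qed
  have "(f' has_integral L) {z..z'}"
    by (rule has_integral_monotone_convergence_increasing[OF FI F_mono conv lim(3)])
  moreover have "negligible {z, z'}" by simp
  moreover have "\<And>x. x \<in> {z..z'} - {z, z'} \<Longrightarrow> f x = f' x" by (auto simp: f'_def)
  ultimately show ?thesis using has_integral_spike by blast
qed

lemma has_integral_interval_exhaustion:
  fixes f \<Phi> :: "real \<Rightarrow> real"
  assumes zlt: "z < z'"
    and I: "\<And>\<alpha> \<beta>. z < \<alpha> \<Longrightarrow> \<alpha> \<le> \<beta> \<Longrightarrow> \<beta> < z' \<Longrightarrow> (f has_integral \<Phi> \<beta> - \<Phi> \<alpha>) {\<alpha>..\<beta>}"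
    and f0: "\<And>x. z < x \<Longrightarrow> x < z' \<Longrightarrow> 0 \<le> f x"
    and \<Phi>l: "(\<Phi> \<longlongrightarrow> a) (at_right z)" and \<Phi>r: "(\<Phi> \<longlongrightarrow> b) (at_left z')"
  shows "(f has_integral b - a) {z..z'}"
proof -
  define d where "d k = (z' - z) / (3 + real k)" for k :: nat
  define \<alpha> where "\<alpha> k = z + d k" for k
  define \<beta> where "\<beta> k = z' - d k" for k
  have d_pos: "d k > 0" for k unfolding d_def using zlt by simp
  have d_small: "d k \<le> (z' - z) / 3" for k unfolding d_def using zlt by (intro divide_left_mono) auto
  have d_mono: "d (Suc k) \<le> d k" for k unfolding d_def using zlt by (intro divide_left_mono) auto
  have d_lim: "d \<longlonglongrightarrow> 0"
    unfolding d_def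
    by (intro tendsto_divide_0[OF tendsto_const] filterlim_at_top_imp_at_infinity
        filterlim_tendsto_add_at_top[OF tendsto_const filterlim_real_sequentially])
  have ab: "z < \<alpha> k" "\<alpha> k < \<beta> k" "\<beta> k < z'" for k
    unfolding \<alpha>_def \<beta>_def using d_pos[of k] d_small[of k] zlt by auto
  have alim: "\<alpha> \<longlonglongrightarrow> z" unfolding \<alpha>_def using tendsto_add[OF tendsto_const d_lim, of z] by simp
  have blim: "\<beta> \<longlonglongrightarrow> z'" unfolding \<beta>_def using tendsto_diff[OF tendsto_const d_lim, of z'] by simp
  have "filterlim \<alpha> (at_right z) sequentially"
    unfolding filterlim_at using alim ab by (auto intro!: always_eventually)
  moreover have "filterlim \<beta> (at_left z') sequentially"
    unfolding filterlim_at using blim ab by (auto intro!: always_eventually)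
  ultimately have Ilim: "(\<lambda>k. \<Phi> (\<beta> k) - \<Phi> (\<alpha> k)) \<longlonglongrightarrow> b - a"
    by (intro tendsto_diff filterlim_compose[OF \<Phi>l] filterlim_compose[OF \<Phi>r])
  show ?thesis
  proof (rule has_integral_increasing_intervals[OF _ _ _ _ _ alim blim Ilim f0])
    show "(f has_integral \<Phi> (\<beta> k) - \<Phi> (\<alpha> k)) {\<alpha> k..\<beta> k}" for k
      by (rule I) (use ab[of k] in auto)
    show "z < \<alpha> k" "\<beta> k < z'" for k using ab[of k] by auto
    show "\<alpha> (Suc k) \<le> \<alpha> k" "\<beta> k \<le> \<beta> (Suc k)" for k
      unfolding \<alpha>_def \<beta>_def using d_mono[of k] by simp_all
  qed
qed

lemma has_integral_by_vanishing_boundary_terms: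
  fixes f g B :: "real \<Rightarrow> real"
  assumes zlt: "z < z'"
    and I: "\<And>\<alpha> \<beta>. z < \<alpha> \<Longrightarrow> \<alpha> \<le> \<beta> \<Longrightarrow> \<beta> < z' \<Longrightarrow> ((\<lambda>x. f x - g x) has_integral B \<beta> - B \<alpha>) {\<alpha>..\<beta>}"
    and f0: "\<And>x. z < x \<Longrightarrow> x < z' \<Longrightarrow> 0 \<le> f x"
    and gi: "g integrable_on {z..z'}"
    and Bl: "(B \<longlongrightarrow> 0) (at z)" and Br: "(B \<longlongrightarrow> 0) (at z')"
  shows "(f has_integral integral {z..z'} g) {z..z'}"
proof -
  define G where "G t = integral {z..t} g" for t
  have G_diff: "(f has_integral (B \<beta> + G \<beta>) - (B \<alpha> + G \<alpha>)) {\<alpha>..\<beta>}"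
    if "z < \<alpha>" "\<alpha> \<le> \<beta>" "\<beta> < z'" for \<alpha> \<beta>
  proof -
    have comb: "integral {z..\<alpha>} g + integral {\<alpha>..\<beta>} g = integral {z..\<beta>} g"
      using that by (intro Henstock_Kurzweil_Integration.integral_combine integrable_on_subinterval[OF gi]) auto
    have "(g has_integral integral {\<alpha>..\<beta>} g) {\<alpha>..\<beta>}"
      using that by (intro integrable_integral integrable_on_subinterval[OF gi]) auto
    from has_integral_add[OF I[OF that] this]
    have "(f has_integral (B \<beta> - B \<alpha>) + integral {\<alpha>..\<beta>} g) {\<alpha>..\<beta>}" by simp
    moreover have "(B \<beta> - B \<alpha>) + integral {\<alpha>..\<beta>} g = (B \<beta> + G \<beta>) - (B \<alpha> + G \<alpha>)"
      using comb unfolding G_def by linarith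
    ultimately show ?thesis by simp
  qed
  have "continuous_on {z..z'} G" unfolding G_def by (rule indefinite_integral_continuous_1[OF gi])
  then have "(G \<longlongrightarrow> G z) (at z within {z..z'})" "(G \<longlongrightarrow> G z') (at z' within {z..z'})"
    using zlt by (auto simp: continuous_on_def)
  moreover have "at_right z = at z within {z..z'}"
    by (rule at_within_nhd[of _ "{..<z'}"]) (use zlt in auto)
  moreover have "at_left z' = at z' within {z..z'}"
    by (rule at_within_nhd[of _ "{z<..}"]) (use zlt in auto)
  ultimately have "(G \<longlongrightarrow> 0) (at_right z)" "(G \<longlongrightarrow> integral {z..z'} g) (at_left z')"
    unfolding G_def by simp_all
  moreover have "(B \<longlongrightarrow> 0) (at_right z)" "(B \<longlongrightarrow> 0) (at_left z')"
    using Bl Br by (auto intro: tendsto_mono[OF at_le])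
  ultimately have "((\<lambda>t. B t + G t) \<longlongrightarrow> 0 + 0) (at_right z)"
    "((\<lambda>t. B t + G t) \<longlongrightarrow> 0 + integral {z..z'} g) (at_left z')"
    by (blast intro: tendsto_add)+
  from has_integral_interval_exhaustion[OF zlt G_diff _ this] f0
  show ?thesis by simp
qed

lemma increment_le_if_locally_dominated:
  fixes \<Phi> M :: "real \<Rightarrow> real"
  assumes ab: "a \<le> b" and \<epsilon>: "\<epsilon> > 0"
    and loc: "\<exists>\<delta>>0. \<forall>x y. a \<le> x \<longrightarrow> x \<le> y \<longrightarrow> y \<le> b \<longrightarrow> y - x < \<delta> \<longrightarrow>
                 \<bar>\<Phi> y - \<Phi> x\<bar> \<le> \<epsilon> * (M y - M x)"
  shows "\<bar>\<Phi> b - \<Phi> a\<bar> \<le> \<epsilon> * (M b - M a)"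
proof -
  obtain \<delta> where d: "\<delta> > 0" and dl: "\<forall>x y. a \<le> x \<longrightarrow> x \<le> y \<longrightarrow> y \<le> b \<longrightarrow> y - x < \<delta> \<longrightarrow>
                 \<bar>\<Phi> y - \<Phi> x\<bar> \<le> \<epsilon> * (M y - M x)" using loc by blast
  have steps: "\<forall>x y. a \<le> x \<longrightarrow> x \<le> y \<longrightarrow> y \<le> b \<longrightarrow> y - x \<le> real n * (\<delta> / 2) \<longrightarrow>
                 \<bar>\<Phi> y - \<Phi> x\<bar> \<le> \<epsilon> * (M y - M x)" for n
  proof (induction n)
    case 0
    then show ?case by auto
  next
    case (Suc n)
    show ?case
    proof (intro allI impI)
      fix x y assume xy: "a \<le> x" "x \<le> y" "y \<le> b" "y - x \<le> real (Suc n) * (\<delta> / 2)"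
      show "\<bar>\<Phi> y - \<Phi> x\<bar> \<le> \<epsilon> * (M y - M x)"
      proof (cases "y - x < \<delta>")
        case True then show ?thesis using dl xy by blast
      next
        case False
        define m where "m = y - \<delta> / 2"
        have m: "x \<le> m" "m \<le> y" "m - x \<le> real n * (\<delta> / 2)" "y - m < \<delta>"
          using False d xy(4) unfolding m_def by (auto simp: algebra_simps)
        have "\<bar>\<Phi> m - \<Phi> x\<bar> \<le> \<epsilon> * (M m - M x)" using Suc.IH xy m by auto
        moreover have "\<bar>\<Phi> y - \<Phi> m\<bar> \<le> \<epsilon> * (M y - M m)" using dl xy m by auto
        ultimately show ?thesis by (simp add: algebra_simps abs_le_iff)
      qed
    qed
  qed
  obtain n where "b - a < real n * (\<delta> / 2)"
    using reals_Archimedean3[of "\<delta> / 2"] d by (meson half_gt_zero)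
  then show ?thesis using steps[of n] ab by auto
qed

lemma eq_if_locally_dominated:
  fixes \<Phi> M :: "real \<Rightarrow> real"
  assumes ab: "a \<le> b"
    and loc: "\<And>\<epsilon>. \<epsilon> > 0 \<Longrightarrow> \<exists>\<delta>>0. \<forall>x y. a \<le> x \<longrightarrow> x \<le> y \<longrightarrow> y \<le> b \<longrightarrow> y - x < \<delta> \<longrightarrow>
                 \<bar>\<Phi> y - \<Phi> x\<bar> \<le> \<epsilon> * (M y - M x)"
    and mono: "M a \<le> M b"
  shows "\<Phi> b = \<Phi> a"
proof -
  have "\<bar>\<Phi> b - \<Phi> a\<bar> \<le> 0 + e" if "e > 0" for e
  proof -
    have "\<bar>\<Phi> b - \<Phi> a\<bar> \<le> e / (M b - M a + 1) * (M b - M a)"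
      using that mono by (intro increment_le_if_locally_dominated[OF ab _ loc]) auto
    also have "\<dots> \<le> e" using that mono by (simp add: field_simps)
    finally show ?thesis by simp
  qed
  then show ?thesis using field_le_epsilon[of "\<bar>\<Phi> b - \<Phi> a\<bar>" 0] by simp
qed

definition ac_primitive_on :: "real set \<Rightarrow> (real \<Rightarrow> real) \<Rightarrow> (real \<Rightarrow> real) \<Rightarrow> bool" where
  "ac_primitive_on S F f \<longleftrightarrow> continuous_on S F \<and>
     (\<forall>a b. a \<le> b \<longrightarrow> {a..b} \<subseteq> S \<longrightarrow> f absolutely_integrable_on {a..b} \<and> (f has_integral (F b - F a)) {a..b})"

lemma ac_primitive_onD:
  assumes "ac_primitive_on S F f" "a \<le> b" "{a..b} \<subseteq> S"
  shows "f absolutely_integrable_on {a..b}" "(f has_integral (F b - F a)) {a..b}"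
  using assms unfolding ac_primitive_on_def by auto

lemma ac_primitive_on_continuous: "ac_primitive_on S F f \<Longrightarrow> continuous_on S F"
  unfolding ac_primitive_on_def by auto

lemma ac_primitive_on_if_derivative:
  assumes d: "\<And>x. x \<in> S \<Longrightarrow> (F has_real_derivative f x) (at x)" and c: "continuous_on S f"
  shows "ac_primitive_on S F f"
  unfolding ac_primitive_on_def
proof (intro conjI allI impI)
  show "continuous_on S F"
    using d DERIV_isCont continuous_at_imp_continuous_on by blast
  fix a b :: real assume ab: "a \<le> b" "{a..b} \<subseteq> S"
  show "f absolutely_integrable_on {a..b}"
    by (rule absolutely_integrable_continuous_real) (rule continuous_on_subset[OF c ab(2)])
  show "(f has_integral F b - F a) {a..b}"
  proof (rule fundamental_theorem_of_calculus[OF ab(1)])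
    fix x assume "x \<in> {a..b}"
    then have "(F has_real_derivative f x) (at x)" using d ab(2) by auto
    then show "(F has_vector_derivative f x) (at x within {a..b})"
      by (simp add: has_real_derivative_iff_has_vector_derivative has_vector_derivative_at_within)
  qed
qed

lemma ac_primitive_on_const: "ac_primitive_on S (\<lambda>x. c) (\<lambda>x. 0)"
  by (rule ac_primitive_on_if_derivative) (auto intro!: derivative_eq_intros)

lemma ac_primitive_on_diff:
  assumes "ac_primitive_on S F f" "ac_primitive_on S G g"
  shows "ac_primitive_on S (\<lambda>x. F x - G x) (\<lambda>x. f x - g x)"
  using assms unfolding ac_primitive_on_def
  by (auto intro!: continuous_on_diff set_integral_diff(1) has_integral_diff[THEN has_integral_eq_rhs])

lemma ac_primitive_on_cmult:
  assumes "ac_primitive_on S F f"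
  shows "ac_primitive_on S (\<lambda>x. c * F x) (\<lambda>x. c * f x)"
  using assms unfolding ac_primitive_on_def
  by (auto intro!: continuous_on_mult set_integrable_mult_right has_integral_mult_right[THEN has_integral_eq_rhs]
      simp: right_diff_distrib)

lemma ac_primitive_on_cong:
  assumes "ac_primitive_on S F f" "\<And>x. x \<in> S \<Longrightarrow> F x = G x" "\<And>x. x \<in> S \<Longrightarrow> f x = g x"
  shows "ac_primitive_on S G g"
  unfolding ac_primitive_on_def
proof (intro conjI allI impI)
  show "continuous_on S G"
    using ac_primitive_on_continuous[OF assms(1)] assms(2) continuous_on_cong by blast
  fix a b :: real assume ab: "a \<le> b" "{a..b} \<subseteq> S"
  have "\<And>x. x \<in> {a..b} - {} \<Longrightarrow> g x = f x" using assms(3) ab(2) by auto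
  then show "g absolutely_integrable_on {a..b}"
    by (rule absolutely_integrable_spike[OF ac_primitive_onD(1)[OF assms(1) ab] negligible_empty])
  have "(g has_integral F b - F a) {a..b}"
    by (rule has_integral_eq[rotated, OF ac_primitive_onD(2)[OF assms(1) ab]]) (use assms(3) ab(2) in auto)
  moreover have "a \<in> S" "b \<in> S" using ab by auto
  ultimately show "(g has_integral G b - G a) {a..b}" using assms(2) by metis
qed

text \<open>The error of the product rule on \<open>[x, y]\<close> is an integral of \<open>f\<close> against
  \<open>G y - G\<close> plus one of \<open>F x - F\<close> against \<open>g\<close>; both factors are small when \<open>F\<close> and \<open>G\<close>
  oscillate little on \<open>[x, y]\<close>.\<close>

lemma product_rule_increment_bound:
  fixes f g F G :: "real \<Rightarrow> real"
  assumes fint: "(f has_integral F y - F x) {x..y}" and gint: "(g has_integral G y - G x) {x..y}"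
    and af: "(\<lambda>t. \<bar>f t\<bar>) integrable_on {x..y}" and ag: "(\<lambda>t. \<bar>g t\<bar>) integrable_on {x..y}"
    and fGi: "(\<lambda>t. f t * G t) integrable_on {x..y}" and Fgi: "(\<lambda>t. F t * g t) integrable_on {x..y}"
    and Fclose: "\<And>t. t \<in> {x..y} \<Longrightarrow> \<bar>F x - F t\<bar> \<le> \<epsilon>"
    and Gclose: "\<And>t. t \<in> {x..y} \<Longrightarrow> \<bar>G y - G t\<bar> \<le> \<epsilon>"
  shows "\<bar>F y * G y - F x * G x - integral {x..y} (\<lambda>t. f t * G t + F t * g t)\<bar>
           \<le> \<epsilon> * integral {x..y} (\<lambda>t. \<bar>f t\<bar> + \<bar>g t\<bar>)"
proof -
  have I1: "((\<lambda>t. f t * (G y - G t)) has_integral G y * (F y - F x) - integral {x..y} (\<lambda>t. f t * G t)) {x..y}"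
  proof -
    have "((\<lambda>t. f t * G y) has_integral (F y - F x) * G y) {x..y}"
      using has_integral_mult_left[OF fint] .
    from has_integral_diff[OF this integrable_integral[OF fGi]] show ?thesis by (simp add: algebra_simps)
  qed
  have I2: "((\<lambda>t. (F x - F t) * g t) has_integral F x * (G y - G x) - integral {x..y} (\<lambda>t. F t * g t)) {x..y}"
  proof -
    have "((\<lambda>t. F x * g t) has_integral F x * (G y - G x)) {x..y}"
      using has_integral_mult_right[OF gint] .
    from has_integral_diff[OF this integrable_integral[OF Fgi]] show ?thesis by (simp add: algebra_simps)
  qed
  have B1: "norm (integral {x..y} (\<lambda>t. f t * (G y - G t))) \<le> integral {x..y} (\<lambda>t. \<epsilon> * \<bar>f t\<bar>)"
  proof (rule integral_norm_bound_integral)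
    show "(\<lambda>t. \<epsilon> * \<bar>f t\<bar>) integrable_on {x..y}" using af by (rule integrable_on_mult_right)
    fix t assume "t \<in> {x..y}"
    then have "\<bar>f t\<bar> * \<bar>G y - G t\<bar> \<le> \<bar>f t\<bar> * \<epsilon>" by (intro mult_left_mono Gclose) auto
    then show "norm (f t * (G y - G t)) \<le> \<epsilon> * \<bar>f t\<bar>" by (simp add: abs_mult mult.commute)
  qed (use I1 in blast)
  have B2: "norm (integral {x..y} (\<lambda>t. (F x - F t) * g t)) \<le> integral {x..y} (\<lambda>t. \<epsilon> * \<bar>g t\<bar>)"
  proof (rule integral_norm_bound_integral)
    show "(\<lambda>t. \<epsilon> * \<bar>g t\<bar>) integrable_on {x..y}" using ag by (rule integrable_on_mult_right)
    fix t assume "t \<in> {x..y}"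
    then have "\<bar>F x - F t\<bar> * \<bar>g t\<bar> \<le> \<epsilon> * \<bar>g t\<bar>" by (intro mult_right_mono Fclose) auto
    then show "norm ((F x - F t) * g t) \<le> \<epsilon> * \<bar>g t\<bar>" by (simp add: abs_mult)
  qed (use I2 in blast)
  have "F y * G y - F x * G x - integral {x..y} (\<lambda>t. f t * G t + F t * g t)
      = integral {x..y} (\<lambda>t. f t * (G y - G t)) + integral {x..y} (\<lambda>t. (F x - F t) * g t)"
    using integral_unique[OF I1] integral_unique[OF I2] integral_add[OF fGi Fgi]
    by (simp add: algebra_simps)
  moreover have "integral {x..y} (\<lambda>t. \<epsilon> * \<bar>f t\<bar>) + integral {x..y} (\<lambda>t. \<epsilon> * \<bar>g t\<bar>)
      = \<epsilon> * integral {x..y} (\<lambda>t. \<bar>f t\<bar> + \<bar>g t\<bar>)"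
    using af ag by (simp add: integral_add distrib_left)
  ultimately show ?thesis using B1 B2 by simp
qed

lemma product_rule_locally_dominated:
  assumes F: "ac_primitive_on S F f" and G: "ac_primitive_on S G g"
    and ab: "{a..b} \<subseteq> S" and e: "\<epsilon> > 0"
  shows "\<exists>\<delta>>0. \<forall>x y. a \<le> x \<longrightarrow> x \<le> y \<longrightarrow> y \<le> b \<longrightarrow> y - x < \<delta> \<longrightarrow>
           \<bar>F y * G y - F x * G x - integral {x..y} (\<lambda>t. f t * G t + F t * g t)\<bar>
             \<le> \<epsilon> * integral {x..y} (\<lambda>t. \<bar>f t\<bar> + \<bar>g t\<bar>)"
proof -
  have cF: "continuous_on {a..b} F" and cG: "continuous_on {a..b} G"
    using ac_primitive_on_continuous[OF F] ac_primitive_on_continuous[OF G] ab continuous_on_subset by blast+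
  obtain d1 where d1: "d1 > 0" "\<forall>x\<in>{a..b}. \<forall>x'\<in>{a..b}. dist x' x < d1 \<longrightarrow> dist (F x') (F x) < \<epsilon>"
    using compact_uniformly_continuous[OF cF] e unfolding uniformly_continuous_on_def by blast
  obtain d2 where d2: "d2 > 0" "\<forall>x\<in>{a..b}. \<forall>x'\<in>{a..b}. dist x' x < d2 \<longrightarrow> dist (G x') (G x) < \<epsilon>"
    using compact_uniformly_continuous[OF cG] e unfolding uniformly_continuous_on_def by blast
  show ?thesis
  proof (intro exI[of _ "min d1 d2"] conjI allI impI)
    fix x y assume xy: "a \<le> x" "x \<le> y" "y \<le> b" "y - x < min d1 d2"
    have sub: "{x..y} \<subseteq> S" using ab xy by auto
    have fi: "f absolutely_integrable_on {x..y}" and gi: "g absolutely_integrable_on {x..y}"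
      using ac_primitive_onD(1)[OF F xy(2) sub] ac_primitive_onD(1)[OF G xy(2) sub] .
    have cFxy: "continuous_on {x..y} F" and cGxy: "continuous_on {x..y} G"
      using cF cG xy by (auto intro: continuous_on_subset)
    show "\<bar>F y * G y - F x * G x - integral {x..y} (\<lambda>t. f t * G t + F t * g t)\<bar>
        \<le> \<epsilon> * integral {x..y} (\<lambda>t. \<bar>f t\<bar> + \<bar>g t\<bar>)"
    proof (rule product_rule_increment_bound)
      show "(f has_integral F y - F x) {x..y}" "(g has_integral G y - G x) {x..y}"
        using ac_primitive_onD(2)[OF F xy(2) sub] ac_primitive_onD(2)[OF G xy(2) sub] .
      show "(\<lambda>t. \<bar>f t\<bar>) integrable_on {x..y}" "(\<lambda>t. \<bar>g t\<bar>) integrable_on {x..y}"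
        using fi gi unfolding absolutely_integrable_on_def by simp_all
      show "(\<lambda>t. f t * G t) integrable_on {x..y}" "(\<lambda>t. F t * g t) integrable_on {x..y}"
        using absolutely_integrable_mult_continuous[OF fi cGxy] absolutely_integrable_mult_continuous[OF gi cFxy]
        by (simp_all add: set_lebesgue_integral_eq_integral(1) mult.commute)
      fix t assume t: "t \<in> {x..y}"
      then have "dist x t < d1" "dist y t < d2" using xy by (auto simp: dist_real_def)
      moreover have "t \<in> {a..b}" "x \<in> {a..b}" "y \<in> {a..b}" using t xy by auto
      ultimately have "dist (F x) (F t) < \<epsilon>" "dist (G y) (G t) < \<epsilon>"
        using d1(2) d2(2) by blast+
      then show "\<bar>F x - F t\<bar> \<le> \<epsilon>" "\<bar>G y - G t\<bar> \<le> \<epsilon>" by (auto simp: dist_real_def)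
    qed
  qed (use d1 d2 in simp)
qed

lemma ac_primitive_on_mult:
  assumes F: "ac_primitive_on S F f" and G: "ac_primitive_on S G g"
  shows "ac_primitive_on S (\<lambda>x. F x * G x) (\<lambda>x. f x * G x + F x * g x)"
  unfolding ac_primitive_on_def
proof (intro conjI allI impI)
  show "continuous_on S (\<lambda>x. F x * G x)"
    using ac_primitive_on_continuous[OF F] ac_primitive_on_continuous[OF G] by (intro continuous_intros)
  fix a b :: real assume ab: "a \<le> b" "{a..b} \<subseteq> S"
  define h where "h t = f t * G t + F t * g t" for t
  define k where "k t = \<bar>f t\<bar> + \<bar>g t\<bar>" for t
  have cF: "continuous_on {a..b} F" and cG: "continuous_on {a..b} G"
    using ac_primitive_on_continuous[OF F] ac_primitive_on_continuous[OF G] ab(2) continuous_on_subset by blast+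
  have fi: "f absolutely_integrable_on {a..b}" and gi: "g absolutely_integrable_on {a..b}"
    using ac_primitive_onD(1)[OF F ab] ac_primitive_onD(1)[OF G ab] .
  have hi: "h absolutely_integrable_on {a..b}"
    unfolding h_def using absolutely_integrable_mult_continuous[OF fi cG] absolutely_integrable_mult_continuous[OF gi cF]
    by (intro set_integral_add(1)) (simp_all add: mult.commute)
  then show "(\<lambda>x. f x * G x + F x * g x) absolutely_integrable_on {a..b}" unfolding h_def .
  have ki: "k absolutely_integrable_on {a..b}"
    unfolding k_def by (intro set_integral_add(1) set_integrable_abs fi gi)
  have sub_int: "\<phi> integrable_on {x..y}"
    if "\<phi> absolutely_integrable_on {a..b}" "a \<le> x" "y \<le> b" for \<phi> :: "real \<Rightarrow> real" and x y
    by (rule integrable_on_subinterval[OF set_lebesgue_integral_eq_integral(1)[OF that(1)]]) (use that in auto)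
  have comb: "integral {a..y} \<phi> - integral {a..x} \<phi> = integral {x..y} \<phi>"
    if "a \<le> x" "x \<le> y" "y \<le> b" "\<phi> absolutely_integrable_on {a..b}" for x y and \<phi> :: "real \<Rightarrow> real"
    using Henstock_Kurzweil_Integration.integral_combine[OF that(1,2) sub_int[OF that(4) order_refl that(3)]]
    by simp
  define \<Phi> where "\<Phi> y = F y * G y - integral {a..y} h" for y
  define M where "M y = integral {a..y} k" for y
  have "\<Phi> b = \<Phi> a"
  proof (rule eq_if_locally_dominated[OF ab(1)])
    have "0 \<le> integral {a..b} k"
      by (rule integral_nonneg[OF sub_int[OF ki order_refl order_refl]]) (simp add: k_def)
    then show "M a \<le> M b" unfolding M_def by simp
  next
    fix \<epsilon> :: real assume "\<epsilon> > 0"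
    from product_rule_locally_dominated[OF F G ab(2) this] obtain \<delta> where \<delta>: "\<delta> > 0"
      "\<forall>x y. a \<le> x \<longrightarrow> x \<le> y \<longrightarrow> y \<le> b \<longrightarrow> y - x < \<delta> \<longrightarrow>
         \<bar>F y * G y - F x * G x - integral {x..y} h\<bar> \<le> \<epsilon> * integral {x..y} k"
      unfolding h_def[symmetric] k_def[symmetric] by blast
    show "\<exists>\<delta>>0. \<forall>x y. a \<le> x \<longrightarrow> x \<le> y \<longrightarrow> y \<le> b \<longrightarrow> y - x < \<delta> \<longrightarrow>
                 \<bar>\<Phi> y - \<Phi> x\<bar> \<le> \<epsilon> * (M y - M x)"
    proof (intro exI[of _ \<delta>] conjI allI impI)
      fix x y assume xy: "a \<le> x" "x \<le> y" "y \<le> b" "y - x < \<delta>"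
      have "\<Phi> y - \<Phi> x = F y * G y - F x * G x - integral {x..y} h"
        unfolding \<Phi>_def using comb[OF xy(1-3) hi] by simp
      moreover have "M y - M x = integral {x..y} k"
        unfolding M_def using comb[OF xy(1-3) ki] .
      ultimately show "\<bar>\<Phi> y - \<Phi> x\<bar> \<le> \<epsilon> * (M y - M x)" using \<delta>(2) xy by simp
    qed (rule \<delta>(1))
  qed
  then have "integral {a..b} h = F b * G b - F a * G a"
    unfolding \<Phi>_def by simp
  then show "((\<lambda>x. f x * G x + F x * g x) has_integral F b * G b - F a * G a) {a..b}"
    using sub_int[OF hi order_refl order_refl] unfolding h_def[abs_def]
    by (metis has_integral_integrable_integral)
qed

lemma ac_primitive_on_subset: "ac_primitive_on S F f \<Longrightarrow> T \<subseteq> S \<Longrightarrow> ac_primitive_on T F f"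
  unfolding ac_primitive_on_def by (auto intro: continuous_on_subset)

text \<open>\<open>F\<close> minus an indefinite integral of \<open>f\<close> is constant on \<open>(a, b)\<close>, hence by continuity on \<open>[a, b]\<close>.\<close>

lemma has_integral_ac_primitive_closure:
  fixes F f :: "real \<Rightarrow> real"
  assumes ab: "a < b" and ac: "ac_primitive_on {a<..<b} F f"
    and cF: "continuous_on {a..b} F" and fi: "f integrable_on {a..b}"
  shows "(f has_integral F b - F a) {a..b}"
proof -
  define G where "G t = integral {a..t} f" for t
  define D where "D t = F t - G t" for t
  define c where "c = (a + b) / 2"
  have c: "c \<in> {a<..<b}" unfolding c_def using ab by auto
  have fsub: "f integrable_on {s..t}" if "a \<le> s" "t \<le> b" for s t
    using integrable_on_subinterval[OF fi] that by auto
  have cG: "continuous_on {a..b} G" unfolding G_def by (rule indefinite_integral_continuous_1[OF fi])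
  have G_diff: "G t - G s = integral {s..t} f" if "a \<le> s" "s \<le> t" "t \<le> b" for s t
    using Henstock_Kurzweil_Integration.integral_combine[OF that(1,2) fsub[OF order_refl that(3)]]
    unfolding G_def by simp
  have F_diff: "F t - F s = integral {s..t} f" if "s \<in> {a<..<b}" "t \<in> {a<..<b}" "s \<le> t" for s t
  proof -
    have "{s..t} \<subseteq> {a<..<b}" using that by auto
    from ac_primitive_onD(2)[OF ac that(3) this] show ?thesis by (simp add: integral_unique)
  qed
  have D_open: "D t = D c" if t: "t \<in> {a<..<b}" for t
  proof (cases "t \<le> c")
    case True
    moreover have "a \<le> t" "c \<le> b" using t c by auto
    ultimately show ?thesis using F_diff[OF t c True] G_diff[of t c] unfolding D_def by simp
  next
    case False
    then have "c \<le> t" by simp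
    moreover have "a \<le> c" "t \<le> b" using t c by auto
    ultimately show ?thesis using F_diff[OF c t] G_diff[of c t] unfolding D_def by simp
  qed
  have "continuous_on (closure {a<..<b}) D"
    unfolding D_def[abs_def] using ab cF cG by (simp add: continuous_on_diff)
  then have D_closed: "D t = D c" if "t \<in> {a..b}" for t
    by (rule continuous_constant_on_closure[OF _ D_open]) (use that ab in simp_all)
  have "F b - F a = G b - G a"
    using D_closed[of a] D_closed[of b] ab unfolding D_def by simp
  then have "F b - F a = integral {a..b} f" using G_diff[of a b] ab by simp
  then show ?thesis using fi by (simp add: has_integral_integral)
qed

locale sn_wave =
  fixes E :: real
  assumes E0: "0 < E" and E1: "E < 1"
begin

definition "k = sqrt ((1 - E) / (1 + E))"
definition "s = sqrt ((1 + E) / 2)"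
definition "A = sqrt (1 - E)"
definition "g \<theta> = sqrt (1 - k\<^sup>2 * (sin \<theta>)\<^sup>2)"

lemma k2: "k\<^sup>2 = (1 - E) / (1 + E)" unfolding k_def using E0 E1 by simp
lemma s2: "s\<^sup>2 = (1 + E) / 2" unfolding s_def using E0 E1 by simp
lemma A2: "A\<^sup>2 = 1 - E" unfolding A_def using E0 E1 by simp
lemma s_pos: "s > 0" unfolding s_def using E0 by simp
lemma A_pos: "A > 0" unfolding A_def using E1 by simp
lemma k2_lt1: "k\<^sup>2 < 1" unfolding k2 using E0 E1 by (simp add: field_simps)

lemma g_arg_pos: "1 - k\<^sup>2 * (sin \<theta>)\<^sup>2 > 0"
proof -
  have "k\<^sup>2 * (sin \<theta>)\<^sup>2 \<le> k\<^sup>2 * 1"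
    by (rule mult_left_mono) (auto simp: abs_square_le_1)
  then show ?thesis using k2_lt1 by linarith
qed

lemma g_pos: "g \<theta> > 0" unfolding g_def using g_arg_pos by simp
lemma g2: "(g \<theta>)\<^sup>2 = 1 - k\<^sup>2 * (sin \<theta>)\<^sup>2" unfolding g_def using g_arg_pos[of \<theta>] by simp
lemma g_le1: "g \<theta> \<le> 1" unfolding g_def by (simp add: real_sqrt_le_1_iff)

definition "ellF \<phi> = ellipticF k \<phi>"

lemma ellipticF_integrand_continuous: "continuous_on UNIV (\<lambda>\<theta>. 1 / sqrt (1 - k\<^sup>2 * (sin \<theta>)\<^sup>2))"
proof -
  have ne: "\<And>\<theta>. sqrt (1 - k\<^sup>2 * (sin \<theta>)\<^sup>2) \<noteq> 0"
    using g_arg_pos by (metis less_irrefl real_sqrt_eq_zero_cancel_iff)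
  show ?thesis by (intro continuous_intros) (use ne in auto)
qed

lemma ellF_deriv: "(ellF has_real_derivative 1 / g \<phi>) (at \<phi>)"
  unfolding ellF_def ellipticF_def g_def
  using sint_has_real_derivative[OF ellipticF_integrand_continuous] .

lemma ellF_cont: "isCont ellF \<phi>"
  using ellF_deriv DERIV_isCont by blast

lemma ellF_0: "ellF 0 = 0" unfolding ellF_def ellipticF_def sint_def by simp

lemma ellF_strict_mono: "x < y \<Longrightarrow> ellF x < ellF y"
proof -
  assume xy: "x < y"
  have "\<forall>t. x \<le> t \<and> t \<le> y \<longrightarrow> (\<exists>d. (ellF has_real_derivative d) (at t) \<and> 0 < d)"
  proof (intro allI impI)
    fix t show "\<exists>d. (ellF has_real_derivative d) (at t) \<and> 0 < d"
      using ellF_deriv[of t] g_pos[of t] by (intro exI[of _ "1 / g t"]) auto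
  qed
  then show ?thesis by (intro DERIV_pos_imp_increasing[OF xy]) blast
qed

lemma ellF_mono: "x \<le> y \<Longrightarrow> ellF x \<le> ellF y"
  using ellF_strict_mono by (cases "x = y") (auto simp: less_imp_le)

lemma ellF_minus_id_mono: "x \<le> y \<Longrightarrow> ellF x - x \<le> ellF y - y"
proof -
  assume xy: "x \<le> y"
  have "\<forall>t. x \<le> t \<and> t \<le> y \<longrightarrow> (\<exists>d. ((\<lambda>t. ellF t - t) has_real_derivative d) (at t) \<and> 0 \<le> d)"
  proof (intro allI impI exI conjI)
    fix t show "((\<lambda>t. ellF t - t) has_real_derivative 1 / g t - 1) (at t)"
      by (auto intro!: derivative_eq_intros ellF_deriv)
    show "0 \<le> 1 / g t - 1" using g_pos[of t] g_le1[of t] by (simp add: field_simps)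
  qed
  then show ?thesis by (intro DERIV_nonneg_imp_nondecreasing[OF xy]) blast
qed

lemma ellF_ge: "0 \<le> \<phi> \<Longrightarrow> \<phi> \<le> ellF \<phi>"
  using ellF_minus_id_mono[of 0 \<phi>] ellF_0 by simp
lemma ellF_le: "\<phi> \<le> 0 \<Longrightarrow> ellF \<phi> \<le> \<phi>"
  using ellF_minus_id_mono[of \<phi> 0] ellF_0 by simp

lemma ellF_surj: "\<exists>\<phi>. ellF \<phi> = x"
proof (cases "0 \<le> x")
  case True
  have "\<exists>t\<ge>0. t \<le> x \<and> ellF t = x"
    by (rule IVT) (use True ellF_0 ellF_ge[OF True] ellF_cont in auto)
  then show ?thesis by auto
next
  case False
  have "\<exists>t\<ge>x. t \<le> 0 \<and> ellF t = x"
    by (rule IVT) (use False ellF_0 ellF_le[of x] ellF_cont in auto)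
  then show ?thesis by auto
qed

lemma ellF_inj: "ellF x = ellF y \<Longrightarrow> x = y"
  using ellF_strict_mono by (metis linorder_neqE_linordered_idom order_less_irrefl)

definition "am x = jacobi_am k x"

lemma ellF_am: "ellF (am x) = x"
proof -
  have "\<exists>!\<phi>. ellF \<phi> = x" using ellF_surj ellF_inj by blast
  then have "\<exists>!\<phi>. ellipticF k \<phi> = x" unfolding ellF_def .
  then have "ellipticF k (THE \<phi>. ellipticF k \<phi> = x) = x" by (rule theI')
  then show ?thesis unfolding am_def jacobi_am_def ellF_def .
qed

lemma am_ellF: "am (ellF \<phi>) = \<phi>"
  using ellF_am[of "ellF \<phi>"] ellF_inj by blast

lemma am_cont: "isCont am x"
proof -
  have "isCont am (ellF (am x))"
    by (rule isCont_inverse_function2[of "am x - 1" "am x" "am x + 1"])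
       (auto simp: am_ellF ellF_cont)
  then show ?thesis by (simp add: ellF_am)
qed

lemma am_deriv: "(am has_real_derivative g (am x)) (at x)"
proof -
  have "(am has_real_derivative inverse (1 / g (am x))) (at x)"
    by (rule DERIV_inverse_function[where f=ellF and g=am and a="x - 1" and b="x + 1"])
       (use ellF_deriv g_pos[of "am x"] am_cont ellF_am in auto)
  then show ?thesis by simp
qed

text \<open>\<open>u0 = A sin ph\<close> with the phase \<open>ph\<close>, and \<open>p = u0'\<close> vanishes exactly where
  \<open>ph = n \<pi> + \<pi> / 2\<close>; \<open>crit n\<close> is the \<open>n\<close>-th such point.\<close>

definition "ph x = am (x * s)"
definition "p x = A * s * (cos (ph x) * g (ph x))"
definition "dp x = - (1 - (u0 E x)\<^sup>2) * u0 E x"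

lemma ph_deriv: "(ph has_real_derivative g (ph x) * s) (at x)"
proof -
  have "((\<lambda>x. am (x * s)) has_real_derivative g (am (x * s)) * s) (at x)"
    by (rule DERIV_chain2[OF am_deriv]) (auto intro!: derivative_eq_intros)
  then show ?thesis unfolding ph_def .
qed

lemma u0_eq: "u0 E = (\<lambda>x. A * sin (ph x))"
  unfolding u0_def jacobi_sn_def ph_def am_def A_def k_def s_def by (rule ext) simp

lemma sin_ph_deriv: "((\<lambda>x. sin (ph x)) has_real_derivative cos (ph x) * (g (ph x) * s)) (at x)"
  by (rule DERIV_chain2[OF DERIV_sin ph_deriv])
lemma cos_ph_deriv: "((\<lambda>x. cos (ph x)) has_real_derivative - sin (ph x) * (g (ph x) * s)) (at x)"
  by (rule DERIV_chain2[OF DERIV_cos ph_deriv])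

lemma g_fun: "(\<lambda>x. g (ph x)) = (\<lambda>x. sqrt (1 - k\<^sup>2 * (sin (ph x) * sin (ph x))))"
  unfolding g_def by (simp add: power2_eq_square)

lemma g_ph_deriv: "((\<lambda>x. g (ph x)) has_real_derivative - (k\<^sup>2 * sin (ph x) * cos (ph x) * s)) (at x)"
proof -
  note q2 = DERIV_mult[OF sin_ph_deriv sin_ph_deriv]
  note q = DERIV_diff[OF DERIV_const[of 1] DERIV_cmult[OF q2, of "k\<^sup>2"]]
  have pos: "0 < 1 - k\<^sup>2 * (sin (ph x) * sin (ph x))" using g_arg_pos[of "ph x"] by (simp add: power2_eq_square)
  note r = DERIV_chain2[OF DERIV_real_sqrt[OF pos] q]
  show ?thesis unfolding g_fun
  proof (rule DERIV_cong[OF r])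
    have "sqrt (1 - k\<^sup>2 * (sin (ph x) * sin (ph x))) = g (ph x)" unfolding g_def by (simp add: power2_eq_square)
    then show "inverse (sqrt (1 - k\<^sup>2 * (sin (ph x) * sin (ph x)))) / 2 *
      (0 - k\<^sup>2 * (cos (ph x) * (g (ph x) * s) * sin (ph x) + cos (ph x) * (g (ph x) * s) * sin (ph x)))
      = - (k\<^sup>2 * sin (ph x) * cos (ph x) * s)"
      using g_pos[of "ph x"] by (simp add: field_simps)
  qed
qed

lemma u0_deriv: "(u0 E has_real_derivative p x) (at x)"
proof -
  have "((\<lambda>x. A * sin (ph x)) has_real_derivative A * (cos (ph x) * (g (ph x) * s))) (at x)"
    by (rule DERIV_cmult[OF sin_ph_deriv])
  then show ?thesis unfolding u0_eq p_def by (simp add: algebra_simps)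
qed

lemma s2k2: "s\<^sup>2 * (1 + k\<^sup>2) = 1" and s2k2': "2 * s\<^sup>2 * k\<^sup>2 = A\<^sup>2"
  unfolding s2 k2 A2 using E0 E1 by (simp_all add: field_simps)

lemma p_deriv: "(p has_real_derivative dp x) (at x)"
proof -
  note d = DERIV_cmult[OF DERIV_mult[OF cos_ph_deriv g_ph_deriv], of "A * s"]
  have "A * s * (- sin (ph x) * (g (ph x) * s) * g (ph x) + - (k\<^sup>2 * sin (ph x) * cos (ph x) * s) * cos (ph x))
      = - A * s\<^sup>2 * sin (ph x) * ((g (ph x))\<^sup>2 + k\<^sup>2 * (cos (ph x))\<^sup>2)"
    by (simp add: power2_eq_square algebra_simps)
  also have "\<dots> = - A * sin (ph x) * (s\<^sup>2 * (1 + k\<^sup>2) - 2 * s\<^sup>2 * k\<^sup>2 * (sin (ph x))\<^sup>2)"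
    unfolding g2 cos_squared_eq by (simp add: algebra_simps)
  also have "\<dots> = dp x"
    unfolding dp_def s2k2 s2k2' u0_eq by (simp add: algebra_simps power2_eq_square)
  finally have eq: "A * s * (- sin (ph x) * (g (ph x) * s) * g (ph x) + - (k\<^sup>2 * sin (ph x) * cos (ph x) * s) * cos (ph x)) = dp x" .
  show ?thesis unfolding p_def by (rule DERIV_cong[OF d eq])
qed

lemma deriv_u0: "deriv (u0 E) = p"
  by (rule ext) (rule DERIV_imp_deriv[OF u0_deriv])
lemma deriv_p: "deriv p = dp"
  by (rule ext) (rule DERIV_imp_deriv[OF p_deriv])

lemma u0_bound: "(u0 E x)\<^sup>2 \<le> 1 - E"
  unfolding u0_eq power_mult_distrib A2 using E1 by (intro mult_left_le) (auto simp: abs_square_le_1)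

lemma u0_abs_le1: "\<bar>u0 E x\<bar> \<le> 1"
  using u0_bound[of x] E0 abs_square_le_1[of "u0 E x"] by linarith

lemma p_sq: "(p x)\<^sup>2 = ((1 - (u0 E x)\<^sup>2)\<^sup>2 - E\<^sup>2) / 2"
proof -
  have "(p x)\<^sup>2 = A\<^sup>2 * s\<^sup>2 * (cos (ph x))\<^sup>2 * (g (ph x))\<^sup>2"
    unfolding p_def by (simp add: power_mult_distrib)
  also have "\<dots> = (1 - E) * ((1 + E) / 2) * (1 - (sin (ph x))\<^sup>2) * (1 - (1 - E) / (1 + E) * (sin (ph x))\<^sup>2)"
    unfolding A2 s2 g2 k2 cos_squared_eq ..
  also have "\<dots> = ((1 - (1 - E) * (sin (ph x))\<^sup>2)\<^sup>2 - E\<^sup>2) / 2"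
    using E0 by (simp add: field_simps power2_eq_square)
  also have "\<dots> = ((1 - (u0 E x)\<^sup>2)\<^sup>2 - E\<^sup>2) / 2"
    unfolding u0_eq by (simp add: power_mult_distrib A2)
  finally show ?thesis .
qed

lemma dp_bound: "\<bar>dp x\<bar> \<le> 1"
proof -
  have a: "\<bar>u0 E x\<bar> \<le> 1" by (rule u0_abs_le1)
  have "0 \<le> 1 - (u0 E x)\<^sup>2" "1 - (u0 E x)\<^sup>2 \<le> 1" using a by (auto simp: abs_square_le_1)
  then have "\<bar>1 - (u0 E x)\<^sup>2\<bar> \<le> 1" by simp
  then have "\<bar>1 - (u0 E x)\<^sup>2\<bar> * \<bar>u0 E x\<bar> \<le> 1 * 1" using a by (intro mult_mono) auto
  moreover have "\<bar>dp x\<bar> = \<bar>1 - (u0 E x)\<^sup>2\<bar> * \<bar>u0 E x\<bar>"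
    unfolding dp_def by (simp only: abs_mult abs_minus_cancel)
  ultimately show ?thesis by simp
qed

lemma p_bound: "\<bar>p x\<bar> \<le> 1"
proof -
  have "0 \<le> 1 - (u0 E x)\<^sup>2" "1 - (u0 E x)\<^sup>2 \<le> 1" using u0_abs_le1[of x] by (auto simp: abs_square_le_1)
  then have "(1 - (u0 E x)\<^sup>2)\<^sup>2 \<le> 1" by (simp add: abs_square_le_1)
  then have h: "(1 - (u0 E x)\<^sup>2)\<^sup>2 - E\<^sup>2 \<le> 2" using zero_le_power2[of E] by linarith
  then have "(p x)\<^sup>2 \<le> 1" unfolding p_sq by simp
  then show ?thesis by (simp add: abs_square_le_1)
qed

lemma dp_deriv: "(dp has_real_derivative (3 * (u0 E x)\<^sup>2 - 1) * p x) (at x)"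
proof -
  note d = DERIV_diff[OF DERIV_mult[OF u0_deriv DERIV_mult[OF u0_deriv u0_deriv]] u0_deriv]
  have "(\<lambda>x. u0 E x * (u0 E x * u0 E x) - u0 E x) = dp"
    unfolding dp_def by (rule ext) (simp add: algebra_simps power2_eq_square)
  then show ?thesis using d by (simp add: algebra_simps power2_eq_square)
qed

lemma p_cont: "continuous_on S p"
  by (intro continuous_at_imp_continuous_on ballI) (rule DERIV_isCont[OF p_deriv])
lemma dp_cont: "continuous_on S dp"
  by (intro continuous_at_imp_continuous_on ballI) (rule DERIV_isCont[OF dp_deriv])
lemma u0_cont: "continuous_on S (u0 E)"
  by (intro continuous_at_imp_continuous_on ballI) (rule DERIV_isCont[OF u0_deriv])

lemma p_zero_iff: "p x = 0 \<longleftrightarrow> cos (ph x) = 0"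
  using A_pos s_pos g_pos[of "ph x"] unfolding p_def by simp

lemma ellF_ph: "ellF (ph x) = x * s"
  unfolding ph_def by (rule ellF_am)

definition "crit (n::int) = ellF (of_int n * pi + pi / 2) / s"

lemma ph_crit: "ph (crit n) = of_int n * pi + pi / 2"
  unfolding ph_def crit_def using s_pos by (simp add: am_ellF)

lemma p_crit: "p (crit n) = 0"
  unfolding p_zero_iff ph_crit cos_zero_iff_int2 by blast

lemma p_zero_iff_crit: "p x = 0 \<longleftrightarrow> (\<exists>n. x = crit n)"
proof
  assume "p x = 0"
  then obtain n :: int where n: "ph x = of_int n * pi + pi / 2"
    unfolding p_zero_iff cos_zero_iff_int2 by blast
  have "x * s = ellF (of_int n * pi + pi / 2)" using ellF_ph[of x] n by simp
  then have "x = crit n" unfolding crit_def using s_pos by (simp add: field_simps)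
  then show "\<exists>n. x = crit n" ..
qed (auto simp: p_crit)

lemma crit_strict_mono: "m < n \<Longrightarrow> crit m < crit n"
proof -
  assume "m < n"
  then have "of_int m * pi + pi / 2 < of_int n * pi + pi / 2" by simp
  then have "ellF (of_int m * pi + pi / 2) < ellF (of_int n * pi + pi / 2)" by (rule ellF_strict_mono)
  then show ?thesis unfolding crit_def using s_pos by (simp add: divide_strict_right_mono)
qed

lemma crit_mono: "m \<le> n \<Longrightarrow> crit m \<le> crit n"
  using crit_strict_mono by (cases "m = n") (auto simp: less_imp_le)

lemma crit_cover: "\<exists>n. crit n \<le> x \<and> x < crit (n + 1)"
proof -
  define n where "n = \<lfloor>(ph x - pi / 2) / pi\<rfloor>"
  have "of_int n \<le> (ph x - pi / 2) / pi" "(ph x - pi / 2) / pi < of_int n + 1"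
    unfolding n_def by linarith+
  then have 1: "of_int n * pi + pi / 2 \<le> ph x" and 2: "ph x < of_int (n + 1) * pi + pi / 2"
    using pi_gt_zero by (simp_all add: field_simps)
  have "ellF (of_int n * pi + pi / 2) \<le> ellF (ph x)" using 1 by (rule ellF_mono)
  then have a: "crit n \<le> x" unfolding crit_def ellF_ph using s_pos by (simp add: field_simps)
  have "ellF (ph x) < ellF (of_int (n + 1) * pi + pi / 2)" using 2 by (rule ellF_strict_mono)
  then have b: "x < crit (n + 1)" unfolding crit_def ellF_ph using s_pos by (simp add: field_simps)
  from a b show ?thesis by blast
qed

lemma p_nonzero_between: "crit n < x \<Longrightarrow> x < crit (n + 1) \<Longrightarrow> p x \<noteq> 0"
proof
  assume a: "crit n < x" "x < crit (n + 1)" "p x = 0"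
  then obtain m where m: "x = crit m" using p_zero_iff_crit by blast
  have "n < m" using a(1) m crit_mono by (metis not_le)
  moreover have "m < n + 1" using a(2) m crit_mono by (metis not_le)
  ultimately show False by simp
qed

lemma crit_ge: "n \<ge> 0 \<Longrightarrow> crit n \<ge> (of_int n * pi + pi / 2) / s"
  unfolding crit_def using s_pos ellF_ge[of "of_int n * pi + pi / 2"]
  by (simp add: divide_right_mono)

lemma crit_le: "n \<le> -1 \<Longrightarrow> crit n \<le> (of_int n * pi + pi / 2) / s"
proof -
  assume n: "n \<le> -1"
  then have "of_int n \<le> (-1::real)" by simp
  then have "of_int n * pi \<le> -1 * pi" by (rule mult_right_mono) simp
  then have "of_int n * pi + pi / 2 \<le> 0" using pi_gt_zero by linarith
  then show ?thesis unfolding crit_def using s_pos ellF_le[of "of_int n * pi + pi / 2"]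
    by (simp add: divide_right_mono)
qed

lemma u0_crit: "(u0 E (crit n))\<^sup>2 = 1 - E"
proof -
  have "(sin (of_int n * pi + pi / 2))\<^sup>2 = 1"
    using cos_zero_iff_int2[of "of_int n * pi + pi / 2"] by (simp add: sin_squared_eq)
  then show ?thesis unfolding u0_eq ph_crit by (simp add: power_mult_distrib A2)
qed

lemma dp_crit: "dp (crit n) \<noteq> 0"
proof -
  have "(dp (crit n))\<^sup>2 = E\<^sup>2 * (1 - E)"
    unfolding dp_def using u0_crit[of n] by (simp add: power_mult_distrib)
  then show ?thesis using E0 E1 by auto
qed

lemma u0_sq_large: "(p x)\<^sup>2 < E * (1 - E) / 2 \<Longrightarrow> (u0 E x)\<^sup>2 \<ge> (1 - E) / 2"
proof -
  assume h: "(p x)\<^sup>2 < E * (1 - E) / 2"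
  define b where "b = (u0 E x)\<^sup>2"
  have b1: "b \<le> 1 - E" unfolding b_def by (rule u0_bound)
  have "2 * (p x)\<^sup>2 = (1 - b - E) * (1 - b + E)" unfolding p_sq b_def by (simp add: power2_eq_square field_simps)
  moreover have "(1 - b - E) * (1 - b + E) \<ge> (1 - b - E) * (2 * E)"
    using b1 by (intro mult_left_mono) auto
  ultimately have "(1 - E - b) * E < E * (1 - E) / 2" using h by (simp add: algebra_simps)
  then have "(1 - E - b) * E < (1 - E) / 2 * E" by (simp add: algebra_simps)
  then have "(1 - E - b) < (1 - E) / 2" using E0 by (simp add: mult_less_cancel_right)
  then show ?thesis unfolding b_def by simp
qed

lemma crit_lt: "crit n < crit (n + 1)" by (rule crit_strict_mono) simp

lemma crit_unbounded: "\<exists>N. \<forall>n\<ge>N. crit (- int n) \<le> x \<and> x \<le> crit (int n)"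
proof -
  obtain N :: nat where N: "\<bar>x\<bar> * s + pi < real N * pi"
    using reals_Archimedean3[OF pi_gt_zero] by blast
  show ?thesis
  proof (intro exI[of _ N] allI impI)
    fix n assume n: "N \<le> n"
    have nN: "real N * pi \<le> real n * pi" using n by simp
    have s0: "0 \<le> s" using s_pos by simp
    have xs: "x * s \<le> \<bar>x\<bar> * s" "(- x) * s \<le> \<bar>x\<bar> * s" "0 \<le> \<bar>x\<bar> * s"
      by (rule mult_right_mono[OF _ s0], simp)+ (simp add: s0)
    have "x * s \<le> real n * pi + pi / 2" using N nN xs pi_gt_zero by linarith
    then have "x \<le> (of_int (int n) * pi + pi / 2) / s" using s_pos by (simp add: field_simps)
    also have "\<dots> \<le> crit (int n)" by (rule crit_ge) simp
    finally have up: "x \<le> crit (int n)" .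
    have n1: "N \<ge> 1"
    proof (rule ccontr)
      assume "\<not> N \<ge> 1" then have "N = 0" by simp
      then show False using N pi_gt_zero xs by simp
    qed
    have "crit (- int n) \<le> (of_int (- int n) * pi + pi / 2) / s" by (rule crit_le) (use n n1 in simp)
    also have "\<dots> \<le> x"
    proof -
      have "- x * s \<le> real n * pi - pi / 2" using N nN xs pi_gt_zero by linarith
      then show ?thesis using s_pos by (simp add: field_simps)
    qed
    finally show "crit (- int n) \<le> x \<and> x \<le> crit (int n)" using up by simp
  qed
qed

lemma has_integral_crit_span:
  fixes f g :: "real \<Rightarrow> real"
  assumes fp: "\<And>n. (f has_integral integral {crit n..crit (n + 1)} g) {crit n..crit (n + 1)}"
    and gi: "\<And>c d. g integrable_on {c..d}"
  shows "(f has_integral integral {crit j..crit (j + int i)} g) {crit j..crit (j + int i)}"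
proof (induction i)
  case 0
  show ?case using has_integral_refl(1)[of f "crit j"] by simp
next
  case (Suc i)
  have le1: "crit j \<le> crit (j + int i)" and le2: "crit (j + int i) \<le> crit (j + int i + 1)"
    by (auto intro: crit_mono)
  have "(f has_integral integral {crit j..crit (j + int i)} g + integral {crit (j + int i)..crit (j + int i + 1)} g)
      {crit j..crit (j + int i + 1)}"
    by (rule has_integral_combine[OF le1 le2 Suc.IH fp])
  moreover have "integral {crit j..crit (j + int i)} g + integral {crit (j + int i)..crit (j + int i + 1)} g
      = integral {crit j..crit (j + int i + 1)} g"
    by (rule Henstock_Kurzweil_Integration.integral_combine[OF le1 le2 gi])
  ultimately have "(f has_integral integral {crit j..crit (j + int i + 1)} g) {crit j..crit (j + int i + 1)}"
    by (simp add: add.assoc)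
  moreover have "j + int (Suc i) = j + int i + 1" by simp
  ultimately show ?case by (simp only:)
qed

lemma has_integral_UNIV_from_crit_intervals:
  fixes f g :: "real \<Rightarrow> real"
  assumes fp: "\<And>n. (f has_integral integral {crit n..crit (n + 1)} g) {crit n..crit (n + 1)}"
    and g: "g absolutely_integrable_on UNIV" and f0: "\<And>x. 0 \<le> f x"
  shows "(f has_integral integral UNIV g) UNIV"
proof -
  have gi: "g integrable_on {c..d}" for c d
    by (rule integrable_on_subinterval[OF set_lebesgue_integral_eq_integral(1)[OF g]]) simp
  define I where "I n = {crit (- int n)..crit (int n)}" for n :: nat
  have fI: "(f has_integral integral (I n) g) (I n)" for n
    using has_integral_crit_span[OF fp gi, of "- int n" "2 * n"] unfolding I_def by simp
  define h where "h n x = (if x \<in> I n then f x else 0)" for n x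
  define gn where "gn n x = (if x \<in> I n then g x else 0)" for n x
  have hI: "(h n has_integral integral (I n) g) UNIV" for n
    unfolding h_def using fI has_integral_restrict_UNIV by blast
  have Isub: "I n \<subseteq> I (Suc n)" for n unfolding I_def by (auto intro: order_trans[OF crit_mono] crit_mono)
  have mono: "h n x \<le> h (Suc n) x" for n x
    using Isub[of n] f0[of x] unfolding h_def by auto
  have evin: "eventually (\<lambda>n. x \<in> I n) sequentially" for x
    using crit_unbounded[of x] unfolding I_def eventually_sequentially by auto
  have hconv: "(\<lambda>n. h n x) \<longlonglongrightarrow> f x" for x
    by (rule tendsto_eventually) (use evin[of x] in \<open>eventually_elim, simp add: h_def\<close>)
  have gconv: "(\<lambda>n. gn n x) \<longlonglongrightarrow> g x" for x
    by (rule tendsto_eventually) (use evin[of x] in \<open>eventually_elim, simp add: gn_def\<close>)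
  have gni: "gn n integrable_on UNIV" for n
    unfolding gn_def integrable_restrict_UNIV I_def by (rule gi)
  have ng: "(\<lambda>x. norm (g x)) integrable_on UNIV" using g unfolding absolutely_integrable_on_def by simp
  have "(\<lambda>n. integral UNIV (gn n)) \<longlonglongrightarrow> integral UNIV g"
    by (rule dominated_convergence(2)[OF gni ng _ gconv]) (simp add: gn_def)
  moreover have "integral UNIV (gn n) = integral (I n) g" for n
    unfolding gn_def by (rule integral_restrict_UNIV)
  ultimately have lim: "(\<lambda>n. integral (I n) g) \<longlonglongrightarrow> integral UNIV g" by simp
  show ?thesis
    by (rule has_integral_monotone_convergence_increasing[OF hI mono hconv lim])
qed

lemma has_integral_across_crit_intervals:
  fixes f F :: "real \<Rightarrow> real"
  assumes piece: "\<And>n \<alpha> \<beta>. crit n \<le> \<alpha> \<Longrightarrow> \<alpha> \<le> \<beta> \<Longrightarrow> \<beta> \<le> crit (n + 1) \<Longrightarrow>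
      (f has_integral F \<beta> - F \<alpha>) {\<alpha>..\<beta>}"
  shows "crit j \<le> \<alpha> \<Longrightarrow> \<alpha> \<le> \<beta> \<Longrightarrow> \<beta> \<le> crit (j + int i + 1) \<Longrightarrow>
      (f has_integral F \<beta> - F \<alpha>) {\<alpha>..\<beta>}"
proof (induction i arbitrary: \<beta>)
  case 0 then show ?case using piece by simp
next
  case (Suc i)
  define \<gamma> where "\<gamma> = crit (j + int i + 1)"
  have e: "j + int (Suc i) + 1 = (j + int i + 1) + 1" by simp
  consider "\<beta> \<le> \<gamma>" | "\<gamma> \<le> \<alpha>" | "\<alpha> < \<gamma>" "\<gamma> < \<beta>" by linarith
  then show ?case
  proof cases
    case 1 then show ?thesis using Suc unfolding \<gamma>_def by blast
  next
    case 2 then show ?thesis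
      by (intro piece[of "j + int i + 1"]) (use Suc.prems e in \<open>auto simp: \<gamma>_def\<close>)
  next
    case 3
    have "(f has_integral F \<gamma> - F \<alpha>) {\<alpha>..\<gamma>}" using Suc 3 unfolding \<gamma>_def by auto
    moreover have "(f has_integral F \<beta> - F \<gamma>) {\<gamma>..\<beta>}"
      by (intro piece[of "j + int i + 1"]) (use Suc.prems 3 e in \<open>auto simp: \<gamma>_def\<close>)
    ultimately have "(f has_integral (F \<gamma> - F \<alpha>) + (F \<beta> - F \<gamma>)) {\<alpha>..\<beta>}"
      by (rule has_integral_combine[rotated 2]) (use 3 in auto)
    then show ?thesis by simp
  qed
qed

lemma has_integral_from_crit_intervals:
  fixes f F :: "real \<Rightarrow> real"
  assumes piece: "\<And>n \<alpha> \<beta>. crit n \<le> \<alpha> \<Longrightarrow> \<alpha> \<le> \<beta> \<Longrightarrow> \<beta> \<le> crit (n + 1) \<Longrightarrow>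
      (f has_integral F \<beta> - F \<alpha>) {\<alpha>..\<beta>}"
    and ab: "a \<le> b"
  shows "(f has_integral F b - F a) {a..b}"
proof -
  obtain j where j: "crit j \<le> a" "a < crit (j + 1)" using crit_cover by blast
  obtain M where M: "crit M \<le> b" "b < crit (M + 1)" using crit_cover by blast
  have "j \<le> M"
  proof (rule ccontr)
    assume "\<not> j \<le> M" then have "crit (M + 1) \<le> crit j" by (intro crit_mono) simp
    then show False using j M ab by simp
  qed
  then have "b \<le> crit (j + int (nat (M - j)) + 1)" using M by simp
  then show ?thesis
    by (rule has_integral_across_crit_intervals[where j=j and i="nat (M - j)", rotated 3])
       (use piece j ab in auto)
qed

end

text \<open>Pointwise product-rule computation behind \<open>ac_Mbdry\<close>: \<open>a, p, dp\<close> stand for \<open>u0, u0', u0''\<close>,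
  constrained only by the ODE and by the first integral \<open>2 u0'\<^sup>2 = (1 - u0\<^sup>2)\<^sup>2 - E\<^sup>2\<close>;
  \<open>ew\<close> is the form that \<open>2 E\<^sup>2 (u0 w / u0')\<^sup>2\<close> takes under these constraints.\<close>

lemma Mbdry_derivative_identity:
  fixes a p q u u1 u2 E w w1 r dq dr Ccoef dCcoef dp ew :: real
  assumes "q * p = dp" "dp = - (1 - a\<^sup>2) * a" "2 * p\<^sup>2 = (1 - a\<^sup>2)\<^sup>2 - E\<^sup>2"
    "r = 3 * a\<^sup>2 - 1" "dq = r - q\<^sup>2" "dr = 6 * a * p" "Ccoef = 12 * (a * p) - 10 * (a * a * q)"
    "dCcoef = 12 * (p * p + a * dp) - 10 * ((p * a + a * p) * q + a * a * dq)"
    "w = u1 - q * u" "w1 = u2 - r * u - q * w" "ew = 2 * w\<^sup>2 * (q\<^sup>2 - 2 * a\<^sup>2)"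
  shows "1 / 2 * ((dCcoef * u + Ccoef * u1) * u + Ccoef * u * u1) - 2 * ((dr * u + r * u1) * w + r * u * w1)
      - ((dq * w + q * w1) * w + q * w * w1)
    = (w1\<^sup>2 + 3 * w\<^sup>2 + ew) - (u2\<^sup>2 + 5 * a\<^sup>2 * u1\<^sup>2 + (- 5 * a ^ 4 + 15 * a\<^sup>2 - 4 + 3 * E\<^sup>2) * u\<^sup>2)"
  unfolding assms(11) assms(10) assms(9) assms(8) assms(7) assms(6) assms(5) assms(4) assms(2)
  using assms(1)[unfolded assms(2)] assms(3) by algebra

lemma Lbdry_derivative_identity:
  fixes a q u u1 w r dq :: real
  assumes "r = 3 * a\<^sup>2 - 1" "dq = r - q\<^sup>2" "w = u1 - q * u"
  shows "- 1 * ((dq * u + q * u1) * u + q * u * u1) = w\<^sup>2 - (u1\<^sup>2 + (3 * a\<^sup>2 - 1) * u\<^sup>2)"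
  unfolding assms by (simp add: algebra_simps power2_eq_square)

locale sn_wave_H2 = sn_wave +
  fixes u u1 u2 :: "real \<Rightarrow> real"
  assumes H2: "H2_with_derivs u u1 u2"
    and u_zero_at_crit: "\<And>x. p x = 0 \<Longrightarrow> u x = 0"
begin

lemma u_deriv: "(u has_real_derivative u1 x) (at x)"
  using H2 unfolding H2_with_derivs_def by auto
lemma u1_cont: "continuous_on UNIV u1"
  using H2 unfolding H2_with_derivs_def H1_with_deriv_def by auto
lemma u1_int: "a \<le> b \<Longrightarrow> (u2 has_integral u1 b - u1 a) {a..b}"
  using H2 unfolding H2_with_derivs_def H1_with_deriv_def by auto
lemma u_square_integrable: "square_integrable u" and u1_square_integrable: "square_integrable u1" and u2_square_integrable: "square_integrable u2"
  using H2 unfolding H2_with_derivs_def H1_with_deriv_def by auto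
lemma u_cont: "continuous_on UNIV u"
  by (intro continuous_at_imp_continuous_on ballI) (rule DERIV_isCont[OF u_deriv])

lemma meas_u [measurable]: "u \<in> borel_measurable lebesgue" using u_cont by (rule continuous_imp_borel_measurable_lebesgue)
lemma meas_u1 [measurable]: "u1 \<in> borel_measurable lebesgue" using u1_cont by (rule continuous_imp_borel_measurable_lebesgue)
lemma meas_u2 [measurable]: "u2 \<in> borel_measurable lebesgue"
  using u2_square_integrable unfolding square_integrable_def measurable_on_UNIV_iff_borel_measurable by simp
lemma meas_u0 [measurable]: "u0 E \<in> borel_measurable lebesgue" using u0_cont by (rule continuous_imp_borel_measurable_lebesgue)
lemma meas_p [measurable]: "p \<in> borel_measurable lebesgue" using p_cont by (rule continuous_imp_borel_measurable_lebesgue)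
lemma meas_dp [measurable]: "dp \<in> borel_measurable lebesgue" using dp_cont by (rule continuous_imp_borel_measurable_lebesgue)

lemma u2_square_int: "(\<lambda>x. (u2 x)\<^sup>2) integrable_on UNIV" and u1_square_int: "(\<lambda>x. (u1 x)\<^sup>2) integrable_on UNIV"
  and u_square_int: "(\<lambda>x. (u x)\<^sup>2) integrable_on UNIV"
  using u_square_integrable u1_square_integrable u2_square_integrable unfolding square_integrable_def by auto

lemma u2_absint: "u2 absolutely_integrable_on {a..b}"
  by (rule square_integrable_on_imp_absolutely_integrable[OF meas_u2 integrable_on_subinterval[OF u2_square_int]]) auto

lemma ac_u: "ac_primitive_on S u u1"
  by (rule ac_primitive_on_if_derivative[OF u_deriv]) (rule continuous_on_subset[OF u1_cont], simp)

lemma ac_u1: "ac_primitive_on S u1 u2"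
  unfolding ac_primitive_on_def using continuous_on_subset[OF u1_cont] u2_absint u1_int by auto

lemma ac_u0: "ac_primitive_on S (u0 E) p" by (rule ac_primitive_on_if_derivative[OF u0_deriv p_cont])
lemma ac_p: "ac_primitive_on S p dp" by (rule ac_primitive_on_if_derivative[OF p_deriv dp_cont])

text \<open>\<open>Mdens\<close> and \<open>Ldens\<close> are the integrands of the quadratic forms of \<open>M\<^sub>+\<close> and \<open>L\<^sub>+\<close>,
  \<open>Mdens_w\<close> is the integrand of the right-hand side, and \<open>negLu = - L\<^sub>+ u\<close>. At the zeros of
  \<open>p\<close>, \<open>w\<close> is given the value \<open>0\<close> of its continuous extension.\<close>

definition "q x = dp x / p x"
definition "r x = 3 * (u0 E x)\<^sup>2 - 1"
definition "w x = (if p x = 0 then 0 else u1 x - q x * u x)"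
definition "w1 x = u2 x - r x * u x - q x * w x"
definition "negLu x = u2 x - r x * u x"
definition "Mdens x = (u2 x)\<^sup>2 + 5 * (u0 E x)\<^sup>2 * (u1 x)\<^sup>2
        + (- 5 * (u0 E x)^4 + 15 * (u0 E x)\<^sup>2 - 4 + 3 * E\<^sup>2) * (u x)\<^sup>2"
definition "Ldens x = (u1 x)\<^sup>2 + (3 * (u0 E x)\<^sup>2 - 1) * (u x)\<^sup>2"
definition "Mdens_w x = (w1 x)\<^sup>2 + 3 * (w x)\<^sup>2 + 2 * E\<^sup>2 * (u0 E x * w x / p x)\<^sup>2"
definition "Ccoef x = 12 * (u0 E x * p x) - 10 * (u0 E x * u0 E x * q x)"
definition "Mbdry x = 1 / 2 * (Ccoef x * u x * u x) - 2 * (r x * u x * w x) - q x * w x * w x"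
definition "Lbdry x = - (q x * u x * u x)"
definition "wronsk x = p x * u1 x - dp x * u x"

lemma meas_q [measurable]: "q \<in> borel_measurable lebesgue" unfolding q_def[abs_def] by measurable
lemma meas_r [measurable]: "r \<in> borel_measurable lebesgue" unfolding r_def[abs_def] by measurable
lemma meas_w [measurable]: "w \<in> borel_measurable lebesgue" unfolding w_def[abs_def] by measurable
lemma meas_w1 [measurable]: "w1 \<in> borel_measurable lebesgue" unfolding w1_def[abs_def] by measurable
lemma meas_negLu [measurable]: "negLu \<in> borel_measurable lebesgue" unfolding negLu_def[abs_def] by measurable

lemma Mdens_absint: "Mdens absolutely_integrable_on UNIV"
proof -
  have a4: "\<bar>- 5 * (u0 E x)^4 + 15 * (u0 E x)\<^sup>2 - 4 + 3 * E\<^sup>2\<bar> \<le> 30" for x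
  proof -
    have "(u0 E x)\<^sup>2 \<le> 1" using u0_abs_le1[of x] by (simp add: abs_square_le_1)
    moreover have "(u0 E x)^4 = ((u0 E x)\<^sup>2)\<^sup>2" by simp
    moreover have "E\<^sup>2 \<le> 1" using E0 E1 by (simp add: abs_square_le_1)
    ultimately show ?thesis using zero_le_power2[of "u0 E x"] zero_le_power2[of "(u0 E x)\<^sup>2"] zero_le_power2[of E]
      by (smt (verit) power2_le_imp_le power_one)
  qed
  have a2: "\<bar>5 * (u0 E x)\<^sup>2\<bar> \<le> 5" for x
    using u0_abs_le1[of x] by (simp add: abs_square_le_1)
  have sq: "(\<lambda>x. (u2 x)\<^sup>2) absolutely_integrable_on UNIV"
    by (rule nonnegative_absolutely_integrable_1[OF u2_square_int]) simp
  show ?thesis unfolding Mdens_def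
    by (intro set_integral_add(1) sq absolutely_integrable_bounded_mult_square[OF u1_square_int _ a2]
        absolutely_integrable_bounded_mult_square[OF u_square_int _ a4]) measurable
qed

lemma Ldens_absint: "Ldens absolutely_integrable_on UNIV"
proof -
  have a2: "\<bar>3 * (u0 E x)\<^sup>2 - 1\<bar> \<le> 4" for x
  proof -
    have "(u0 E x)\<^sup>2 \<le> 1" using u0_abs_le1[of x] by (simp add: abs_square_le_1)
    then show ?thesis using zero_le_power2[of "u0 E x"] unfolding abs_le_iff by linarith
  qed
  have sq: "(\<lambda>x. (u1 x)\<^sup>2) absolutely_integrable_on UNIV"
    by (rule nonnegative_absolutely_integrable_1[OF u1_square_int]) simp
  show ?thesis unfolding Ldens_def
    by (intro set_integral_add(1) sq absolutely_integrable_bounded_mult_square[OF u_square_int _ a2]) measurable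
qed

definition "dq x = r x - (q x)\<^sup>2"
definition "dr x = 6 * u0 E x * p x"
definition "dCcoef x = 12 * (p x * p x + u0 E x * dp x) - 10 * ((p x * u0 E x + u0 E x * p x) * q x + u0 E x * u0 E x * dq x)"

lemma q_deriv: "p x \<noteq> 0 \<Longrightarrow> (q has_real_derivative dq x) (at x)"
proof -
  assume px: "p x \<noteq> 0"
  have "((\<lambda>x. dp x / p x) has_real_derivative
      ((3 * (u0 E x)\<^sup>2 - 1) * p x * p x - dp x * dp x) / (p x * p x)) (at x)"
    by (rule DERIV_divide[OF dp_deriv p_deriv px])
  moreover have "((3 * (u0 E x)\<^sup>2 - 1) * p x * p x - dp x * dp x) / (p x * p x) = dq x"
    unfolding dq_def r_def q_def using px by (simp add: field_simps power2_eq_square)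
  ultimately show ?thesis unfolding q_def[abs_def] by simp
qed

context
  fixes S :: "real set"
  assumes pS: "\<And>x. x \<in> S \<Longrightarrow> p x \<noteq> 0"
begin

lemma dq_cont: "continuous_on S dq"
  unfolding dq_def[abs_def] r_def[abs_def] q_def[abs_def]
  by (intro continuous_intros u0_cont dp_cont p_cont) (use pS in auto)

lemma ac_q: "ac_primitive_on S q dq"
  by (rule ac_primitive_on_if_derivative[OF q_deriv[OF pS] dq_cont])

lemma ac_r: "ac_primitive_on S r dr"
proof (rule ac_primitive_on_cong[OF ac_primitive_on_diff[OF
      ac_primitive_on_cmult[OF ac_primitive_on_mult[OF ac_u0 ac_u0], where c=3] ac_primitive_on_const[of S 1]]])
  show "3 * (u0 E x * u0 E x) - 1 = r x" for x unfolding r_def by (simp add: power2_eq_square)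
  show "3 * (p x * u0 E x + u0 E x * p x) - 0 = dr x" for x unfolding dr_def by (simp add: algebra_simps)
qed

lemma ac_w: "ac_primitive_on S w w1"
proof (rule ac_primitive_on_cong[OF ac_primitive_on_diff[OF ac_u1 ac_primitive_on_mult[OF ac_q ac_u]]])
  fix x assume x: "x \<in> S"
  show "u1 x - q x * u x = w x" unfolding w_def using pS[OF x] by simp
  show "u2 x - (dq x * u x + q x * u1 x) = w1 x"
    unfolding w1_def w_def dq_def using pS[OF x] by (simp add: algebra_simps power2_eq_square)
qed

lemma ac_Ccoef: "ac_primitive_on S Ccoef dCcoef"
proof (rule ac_primitive_on_cong[OF ac_primitive_on_diff[OF ac_primitive_on_cmult[OF ac_primitive_on_mult[OF ac_u0 ac_p], where c=12]
        ac_primitive_on_cmult[OF ac_primitive_on_mult[OF ac_primitive_on_mult[OF ac_u0 ac_u0] ac_q], where c=10]]])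
  show "12 * (u0 E x * p x) - 10 * (u0 E x * u0 E x * q x) = Ccoef x" for x unfolding Ccoef_def ..
  show "12 * (p x * p x + u0 E x * dp x) - 10 * ((p x * u0 E x + u0 E x * p x) * q x + u0 E x * u0 E x * dq x) = dCcoef x"
    for x unfolding dCcoef_def ..
qed

lemma E_term_eq: "p x \<noteq> 0 \<Longrightarrow> 2 * E\<^sup>2 * (u0 E x * w x / p x)\<^sup>2 = 2 * (w x)\<^sup>2 * ((q x)\<^sup>2 - 2 * (u0 E x)\<^sup>2)"
proof -
  assume px: "p x \<noteq> 0"
  have P2: "2 * (p x)\<^sup>2 = (1 - (u0 E x)\<^sup>2)\<^sup>2 - E\<^sup>2" using p_sq[of x] by simp
  have dp2: "(dp x)\<^sup>2 = (1 - (u0 E x)\<^sup>2)\<^sup>2 * (u0 E x)\<^sup>2"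
    unfolding dp_def power_mult_distrib power2_minus by (rule refl)
  have "(q x)\<^sup>2 = (1 - (u0 E x)\<^sup>2)\<^sup>2 * (u0 E x)\<^sup>2 / (p x)\<^sup>2"
    unfolding q_def power_divide dp2 ..
  also have "\<dots> = (2 * (p x)\<^sup>2 + E\<^sup>2) * (u0 E x)\<^sup>2 / (p x)\<^sup>2" using P2 by simp
  also have "\<dots> = 2 * (u0 E x)\<^sup>2 + E\<^sup>2 * (u0 E x)\<^sup>2 / (p x)\<^sup>2" using px by (simp add: field_simps)
  finally have h: "E\<^sup>2 * (u0 E x)\<^sup>2 / (p x)\<^sup>2 = (q x)\<^sup>2 - 2 * (u0 E x)\<^sup>2" by simp
  have "2 * E\<^sup>2 * (u0 E x * w x / p x)\<^sup>2 = 2 * (w x)\<^sup>2 * (E\<^sup>2 * (u0 E x)\<^sup>2 / (p x)\<^sup>2)"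
    by (simp add: power_divide power_mult_distrib)
  then show ?thesis using h by simp
qed

lemma ac_Mbdry: "ac_primitive_on S Mbdry (\<lambda>x. Mdens_w x - Mdens x)"
proof (rule ac_primitive_on_cong[OF ac_primitive_on_diff[OF ac_primitive_on_diff[OF
          ac_primitive_on_cmult[OF ac_primitive_on_mult[OF ac_primitive_on_mult[OF ac_Ccoef ac_u] ac_u], where c="1/2"]
          ac_primitive_on_cmult[OF ac_primitive_on_mult[OF ac_primitive_on_mult[OF ac_r ac_u] ac_w], where c=2]]
          ac_primitive_on_mult[OF ac_primitive_on_mult[OF ac_q ac_w] ac_w]]])
  show "1 / 2 * (Ccoef x * u x * u x) - 2 * (r x * u x * w x) - q x * w x * w x = Mbdry x" for x
    unfolding Mbdry_def ..
  fix x assume x: "x \<in> S"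
  have px: "p x \<noteq> 0" using pS[OF x] .
  show "1 / 2 * ((dCcoef x * u x + Ccoef x * u1 x) * u x + Ccoef x * u x * u1 x)
      - 2 * ((dr x * u x + r x * u1 x) * w x + r x * u x * w1 x)
      - ((dq x * w x + q x * w1 x) * w x + q x * w x * w1 x) = Mdens_w x - Mdens x"
    unfolding Mdens_w_def Mdens_def
  proof (rule Mbdry_derivative_identity)
    show "q x * p x = dp x" unfolding q_def using px by simp
    show "dp x = - (1 - (u0 E x)\<^sup>2) * u0 E x" unfolding dp_def ..
    show "2 * (p x)\<^sup>2 = (1 - (u0 E x)\<^sup>2)\<^sup>2 - E\<^sup>2" using p_sq[of x] by simp
    show "r x = 3 * (u0 E x)\<^sup>2 - 1" unfolding r_def ..
    show "dq x = r x - (q x)\<^sup>2" unfolding dq_def ..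
    show "dr x = 6 * u0 E x * p x" unfolding dr_def ..
    show "Ccoef x = 12 * (u0 E x * p x) - 10 * (u0 E x * u0 E x * q x)" unfolding Ccoef_def ..
    show "dCcoef x = 12 * (p x * p x + u0 E x * dp x) - 10 * ((p x * u0 E x + u0 E x * p x) * q x + u0 E x * u0 E x * dq x)"
      unfolding dCcoef_def ..
    show "w x = u1 x - q x * u x" unfolding w_def using px by simp
    show "w1 x = u2 x - r x * u x - q x * w x" unfolding w1_def ..
    show "2 * E\<^sup>2 * (u0 E x * w x / p x)\<^sup>2 = 2 * (w x)\<^sup>2 * ((q x)\<^sup>2 - 2 * (u0 E x)\<^sup>2)"
      using E_term_eq[OF px] .
  qed
qed

lemma ac_Lbdry: "ac_primitive_on S Lbdry (\<lambda>x. (w x)\<^sup>2 - Ldens x)"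
proof (rule ac_primitive_on_cong[OF
      ac_primitive_on_cmult[OF ac_primitive_on_mult[OF ac_primitive_on_mult[OF ac_q ac_u] ac_u], where c="-1"]])
  show "- 1 * (q x * u x * u x) = Lbdry x" for x unfolding Lbdry_def by simp
  fix x assume x: "x \<in> S"
  show "- 1 * ((dq x * u x + q x * u1 x) * u x + q x * u x * u1 x) = (w x)\<^sup>2 - Ldens x"
    unfolding Ldens_def
    by (rule Lbdry_derivative_identity) (use pS[OF x] in \<open>auto simp: r_def dq_def w_def\<close>)
qed

end

lemma p_piece: "x \<in> {crit n<..<crit (n + 1)} \<Longrightarrow> p x \<noteq> 0"
  using p_nonzero_between by auto

lemma ac_dp: "ac_primitive_on S dp (\<lambda>x. r x * p x)"
proof (rule ac_primitive_on_if_derivative)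
  show "(dp has_real_derivative r x * p x) (at x)" for x using dp_deriv[of x] unfolding r_def .
  show "continuous_on S (\<lambda>x. r x * p x)" unfolding r_def[abs_def] by (intro continuous_intros u0_cont p_cont)
qed

lemma ac_wronsk: "ac_primitive_on S wronsk (\<lambda>x. p x * negLu x)"
proof (rule ac_primitive_on_cong[OF ac_primitive_on_diff[OF ac_primitive_on_mult[OF ac_p ac_u1] ac_primitive_on_mult[OF ac_dp ac_u]]])
  show "p x * u1 x - dp x * u x = wronsk x" for x unfolding wronsk_def ..
  show "dp x * u1 x + p x * u2 x - (r x * p x * u x + dp x * u1 x) = p x * negLu x" for x
    unfolding negLu_def by (simp add: algebra_simps)
qed

lemma r_cont: "continuous_on S r" unfolding r_def[abs_def] by (intro continuous_intros u0_cont)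

lemma negLu_absint: "negLu absolutely_integrable_on {c..d}"
proof -
  have "(\<lambda>x. r x * u x) absolutely_integrable_on {c..d}"
    by (rule absolutely_integrable_continuous_real) (intro continuous_intros r_cont continuous_on_subset[OF u_cont], simp)
  then show ?thesis unfolding negLu_def[abs_def] by (rule set_integral_diff(1)[OF u2_absint])
qed

lemma negLu_square_int: "(\<lambda>x. (negLu x)\<^sup>2) integrable_on {c..d}"
proof -
  have "(\<lambda>x. (negLu x)\<^sup>2) absolutely_integrable_on {c..d}"
  proof (rule absolutely_integrable_if_abs_le)
    show "(\<lambda>x. (negLu x)\<^sup>2) \<in> borel_measurable lebesgue" by measurable
    have c: "(\<lambda>x. 2 * (r x * u x)\<^sup>2) integrable_on {c..d}"
      by (rule integrable_continuous_real) (intro continuous_intros r_cont continuous_on_subset[OF u_cont], simp)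
    have "(\<lambda>x. 2 * (u2 x)\<^sup>2) integrable_on {c..d}"
      by (intro integrable_on_mult_right integrable_on_subinterval[OF u2_square_int]) auto
    from integrable_add[OF this c]
    show "(\<lambda>x. 2 * (u2 x)\<^sup>2 + 2 * (r x * u x)\<^sup>2) integrable_on {c..d}" .
    fix x
    have "2 * (u2 x)\<^sup>2 + 2 * (r x * u x)\<^sup>2 - (negLu x)\<^sup>2 = (u2 x + r x * u x)\<^sup>2"
      unfolding negLu_def by (simp add: power2_eq_square algebra_simps)
    then show "\<bar>(negLu x)\<^sup>2\<bar> \<le> 2 * (u2 x)\<^sup>2 + 2 * (r x * u x)\<^sup>2"
      using zero_le_power2[of "u2 x + r x * u x"] unfolding abs_power2 by linarith
  qed auto
  then show ?thesis using set_lebesgue_integral_eq_integral(1) by blast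
qed

lemma negLu_abs_int: "(\<lambda>x. \<bar>negLu x\<bar>) integrable_on {c..d}"
  using negLu_absint unfolding absolutely_integrable_on_def by simp

lemma w_eq: "p y \<noteq> 0 \<Longrightarrow> w y = wronsk y / p y"
  unfolding w_def wronsk_def q_def by (simp add: field_simps)

lemma r_bound: "\<bar>r x\<bar> \<le> 2"
proof -
  have "(u0 E x)\<^sup>2 \<le> 1" using u0_abs_le1[of x] by (simp add: abs_square_le_1)
  then show ?thesis unfolding r_def using zero_le_power2[of "u0 E x"] unfolding abs_le_iff by linarith
qed

lemma Ccoef_bound: "\<bar>Ccoef x\<bar> \<le> 12 + 10 * \<bar>q x\<bar>"
proof -
  have a: "\<bar>u0 E x\<bar> \<le> 1" by (rule u0_abs_le1)
  have "\<bar>u0 E x * p x\<bar> \<le> 1 * 1" by (rule abs_mult_le_mult[OF a p_bound])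
  moreover have "\<bar>u0 E x * u0 E x * q x\<bar> \<le> 1 * 1 * \<bar>q x\<bar>" by (rule abs_mult_le_mult[OF abs_mult_le_mult[OF a a]]) simp
  ultimately show ?thesis unfolding Ccoef_def by (simp add: abs_le_iff)
qed


context
  fixes z assumes pz: "p z = 0"
begin

lemma u_z: "u z = 0" by (rule u_zero_at_crit[OF pz])

lemma dp_z_nonzero: "dp z \<noteq> 0"
proof -
  obtain n where "z = crit n" using pz p_zero_iff_crit by blast
  then show ?thesis using dp_crit by simp
qed

definition "m = \<bar>dp z\<bar> / 2"
lemma m_pos: "m > 0" unfolding m_def using dp_z_nonzero by simp

lemma p_lower: "\<exists>\<delta>>0. \<forall>y. y \<noteq> z \<and> \<bar>y - z\<bar> < \<delta> \<longrightarrow> m * \<bar>y - z\<bar> \<le> \<bar>p y\<bar>"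
proof -
  have "(\<lambda>h. (p (z + h) - p z) / h) \<midarrow>0\<rightarrow> dp z" using p_deriv[of z] unfolding DERIV_def .
  from LIM_D[OF this m_pos] obtain s where s: "s > 0"
    "\<forall>h. h \<noteq> 0 \<and> norm (h - 0) < s \<longrightarrow> norm ((p (z + h) - p z) / h - dp z) < m" by blast
  show ?thesis
  proof (intro exI[of _ s] conjI allI impI)
    fix y assume y: "y \<noteq> z \<and> \<bar>y - z\<bar> < s"
    then have "\<bar>p y / (y - z) - dp z\<bar> < m" using s(2)[rule_format, of "y - z"] pz by simp
    then have "\<bar>dp z\<bar> - m \<le> \<bar>p y / (y - z)\<bar>" by linarith
    then have "m \<le> \<bar>p y\<bar> / \<bar>y - z\<bar>" unfolding m_def by (simp add: abs_divide)
    then show "m * \<bar>y - z\<bar> \<le> \<bar>p y\<bar>" using y by (simp add: field_simps)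
  qed (use s in auto)
qed

lemma p_upper: "\<bar>p y\<bar> \<le> \<bar>y - z\<bar>"
  using field_differentiable_bound[of UNIV p dp 1 y z] p_deriv dp_bound pz
  by (simp add: has_field_derivative_at_within)

definition "Uz = (SUP t\<in>{z - 1..z + 1}. \<bar>u1 t\<bar>)"

lemma u1_le_Uz: "t \<in> {z - 1..z + 1} \<Longrightarrow> \<bar>u1 t\<bar> \<le> Uz"
proof -
  have "bounded ((\<lambda>t. \<bar>u1 t\<bar>) ` {z - 1..z + 1})"
    by (intro compact_imp_bounded compact_continuous_image continuous_intros
        continuous_on_subset[OF u1_cont]) auto
  then show "t \<in> {z - 1..z + 1} \<Longrightarrow> \<bar>u1 t\<bar> \<le> Uz"
    unfolding Uz_def by (intro cSUP_upper bounded_imp_bdd_above)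
qed

lemma u_le_Uz_dist: "\<bar>y - z\<bar> \<le> 1 \<Longrightarrow> \<bar>u y\<bar> \<le> Uz * \<bar>y - z\<bar>"
  using field_differentiable_bound[of "{z - 1..z + 1}" u u1 Uz y z] u_deriv u1_le_Uz u_z
  by (auto simp: has_field_derivative_at_within abs_le_iff)

definition "Jabs y = integral {min z y..max z y} (\<lambda>t. \<bar>negLu t\<bar>)"
definition "Jsq y = integral {min z y..max z y} (\<lambda>t. (negLu t)\<^sup>2)"

lemma wronsk_bound: "\<bar>wronsk y\<bar> \<le> \<bar>y - z\<bar> * Jabs y"
proof -
  have wronskz: "wronsk z = 0" unfolding wronsk_def using pz u_z by simp
  have bnd: "\<bar>integral {min z y..max z y} (\<lambda>t. p t * negLu t)\<bar> \<le> \<bar>y - z\<bar> * Jabs y"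
  proof -
    have "norm (integral {min z y..max z y} (\<lambda>t. p t * negLu t)) \<le> integral {min z y..max z y} (\<lambda>t. \<bar>y - z\<bar> * \<bar>negLu t\<bar>)"
    proof (rule integral_norm_bound_integral)
      have mm: "min z y \<le> max z y" by simp
      show "(\<lambda>t. p t * negLu t) integrable_on {min z y..max z y}"
        using has_integral_integrable[OF ac_primitive_onD(2)[OF ac_wronsk mm subset_UNIV]] .
      show "(\<lambda>t. \<bar>y - z\<bar> * \<bar>negLu t\<bar>) integrable_on {min z y..max z y}"
        by (intro integrable_on_mult_right negLu_abs_int)
      fix t assume t: "t \<in> {min z y..max z y}"
      have "\<bar>p t\<bar> \<le> \<bar>y - z\<bar>" using p_upper[of t] t by (auto simp: abs_le_iff)
      then show "norm (p t * negLu t) \<le> \<bar>y - z\<bar> * \<bar>negLu t\<bar>"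
        by (simp add: abs_mult mult_right_mono)
    qed
    then show ?thesis unfolding Jabs_def by simp
  qed
  show ?thesis
  proof (cases "z \<le> y")
    case True
    have "((\<lambda>t. p t * negLu t) has_integral wronsk y - wronsk z) {z..y}" using ac_primitive_onD(2)[OF ac_wronsk[of UNIV] True] by simp
    then have "wronsk y = integral {min z y..max z y} (\<lambda>t. p t * negLu t)" using True wronskz by (simp add: integral_unique)
    then show ?thesis using bnd by simp
  next
    case False
    then have le: "y \<le> z" by simp
    have "((\<lambda>t. p t * negLu t) has_integral wronsk z - wronsk y) {y..z}" using ac_primitive_onD(2)[OF ac_wronsk[of UNIV] le] by simp
    then have "- wronsk y = integral {min z y..max z y} (\<lambda>t. p t * negLu t)" using le wronskz by (simp add: integral_unique)
    then show ?thesis using bnd by simp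
  qed
qed

lemma Jabs_square_le: "(Jabs y)\<^sup>2 \<le> \<bar>y - z\<bar> * Jsq y"
proof -
  have "(Jabs y)\<^sup>2 \<le> (max z y - min z y) * Jsq y"
    unfolding Jabs_def Jsq_def by (rule integral_abs_square_le[OF _ negLu_absint negLu_square_int]) simp
  moreover have "max z y - min z y = \<bar>y - z\<bar>" by (simp add: abs_if max_def min_def)
  ultimately show ?thesis by simp
qed

lemma Jabs_lim: "(Jabs \<longlongrightarrow> 0) (at z)" unfolding Jabs_def[abs_def] by (rule integral_shrinking_interval_tendsto_0[OF negLu_abs_int])
lemma Jsq_lim: "(Jsq \<longlongrightarrow> 0) (at z)" unfolding Jsq_def[abs_def] by (rule integral_shrinking_interval_tendsto_0[OF negLu_square_int])
lemma dist_lim: "((\<lambda>y. \<bar>y - z\<bar>) \<longlongrightarrow> 0) (at z)"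
proof -
  have "((\<lambda>y. y - z) \<longlongrightarrow> z - z) (at z)" by (intro tendsto_intros)
  then show ?thesis using tendsto_rabs_zero by force
qed

lemma Jabs_nonneg: "Jabs y \<ge> 0" unfolding Jabs_def by (rule integral_nonneg[OF negLu_abs_int]) simp

lemma near_crit: "eventually (\<lambda>y. y \<noteq> z \<and> p y \<noteq> 0 \<and> \<bar>q y\<bar> * (m * \<bar>y - z\<bar>) \<le> 1 \<and> \<bar>w y\<bar> \<le> Jabs y / m
     \<and> \<bar>u y\<bar> \<le> Uz * \<bar>y - z\<bar>) (at z)"
proof -
  obtain \<delta> where d: "\<delta> > 0" "\<forall>y. y \<noteq> z \<and> \<bar>y - z\<bar> < \<delta> \<longrightarrow> m * \<bar>y - z\<bar> \<le> \<bar>p y\<bar>"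
    using p_lower by blast
  have main: "\<forall>y. y \<noteq> z \<and> dist y z < min \<delta> 1 \<longrightarrow> y \<noteq> z \<and> p y \<noteq> 0 \<and> \<bar>q y\<bar> * (m * \<bar>y - z\<bar>) \<le> 1 \<and> \<bar>w y\<bar> \<le> Jabs y / m
     \<and> \<bar>u y\<bar> \<le> Uz * \<bar>y - z\<bar>"
  proof (intro allI impI)
    fix y assume y: "y \<noteq> z \<and> dist y z < min \<delta> 1"
    then have y1: "y \<noteq> z" "\<bar>y - z\<bar> < \<delta>" "\<bar>y - z\<bar> < 1" by (auto simp: dist_real_def)
    have lo: "m * \<bar>y - z\<bar> \<le> \<bar>p y\<bar>" using d(2) y1 by blast
    have mpos: "m * \<bar>y - z\<bar> > 0" using m_pos y1 by simp
    then have py: "p y \<noteq> 0" using lo by auto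
    have "\<bar>q y\<bar> * (m * \<bar>y - z\<bar>) \<le> \<bar>q y\<bar> * \<bar>p y\<bar>" using lo by (intro mult_left_mono) auto
    also have "\<dots> = \<bar>dp y\<bar>" unfolding q_def using py by (simp add: abs_divide)
    also have "\<dots> \<le> 1" by (rule dp_bound)
    finally have hq: "\<bar>q y\<bar> * (m * \<bar>y - z\<bar>) \<le> 1" .
    have "\<bar>w y\<bar> = \<bar>wronsk y\<bar> / \<bar>p y\<bar>" using w_eq[OF py] by (simp add: abs_divide)
    also have "\<dots> \<le> (\<bar>y - z\<bar> * Jabs y) / (m * \<bar>y - z\<bar>)"
      by (rule frac_le) (use wronsk_bound[of y] mpos lo Jabs_nonneg[of y] in auto)
    also have "\<dots> = Jabs y / m" using y1 m_pos by (simp add: field_simps)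
    finally have hw: "\<bar>w y\<bar> \<le> Jabs y / m" .
    have hu: "\<bar>u y\<bar> \<le> Uz * \<bar>y - z\<bar>" by (rule u_le_Uz_dist) (use y1 in auto)
    show "y \<noteq> z \<and> p y \<noteq> 0 \<and> \<bar>q y\<bar> * (m * \<bar>y - z\<bar>) \<le> 1 \<and> \<bar>w y\<bar> \<le> Jabs y / m \<and> \<bar>u y\<bar> \<le> Uz * \<bar>y - z\<bar>"
      using y1 py hq hw hu by blast
  qed
  show ?thesis unfolding eventually_at using d(1) main by (intro exI[of _ "min \<delta> 1"]) auto
qed

lemma w_lim: "(w \<longlongrightarrow> 0) (at z)"
proof (rule Lim_null_comparison)
  show "eventually (\<lambda>y. norm (w y) \<le> Jabs y / m) (at z)"
    using near_crit by eventually_elim auto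
  show "((\<lambda>y. Jabs y / m) \<longlongrightarrow> 0) (at z)" using tendsto_divide[OF Jabs_lim tendsto_const, of m] m_pos by simp
qed

lemma Lbdry_lim: "(Lbdry \<longlongrightarrow> 0) (at z)"
proof (rule Lim_null_comparison)
  show "eventually (\<lambda>y. norm (Lbdry y) \<le> Uz * Uz * \<bar>y - z\<bar> / m) (at z)"
    using near_crit
  proof eventually_elim
    case (elim y)
    define d where "d = \<bar>y - z\<bar>"
    have d: "d > 0" using elim unfolding d_def by auto
    have hq: "\<bar>q y\<bar> \<le> 1 / (m * d)" using elim d m_pos unfolding d_def[symmetric] by (simp add: field_simps)
    have hu: "\<bar>u y\<bar> \<le> Uz * d" using elim unfolding d_def by simp
    have "\<bar>q y * u y * u y\<bar> \<le> 1 / (m * d) * (Uz * d) * (Uz * d)"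
      by (intro abs_mult_le_mult hq hu)
    also have "\<dots> = Uz * Uz * d / m" using d m_pos by (simp add: field_simps)
    finally show ?case unfolding Lbdry_def d_def by simp
  qed
  have "((\<lambda>y. Uz * Uz * \<bar>y - z\<bar> / m) \<longlongrightarrow> Uz * Uz * 0 / m) (at z)"
    by (intro tendsto_intros dist_lim) (use m_pos in simp)
  then show "((\<lambda>y. Uz * Uz * \<bar>y - z\<bar> / m) \<longlongrightarrow> 0) (at z)" by simp
qed

lemma Mbdry_le:
  assumes y: "y \<noteq> z" and hq': "\<bar>q y\<bar> * (m * \<bar>y - z\<bar>) \<le> 1"
    and hw: "\<bar>w y\<bar> \<le> Jabs y / m" and hu: "\<bar>u y\<bar> \<le> Uz * \<bar>y - z\<bar>"
  shows "\<bar>Mbdry y\<bar> \<le> 6 * Uz * Uz * \<bar>y - z\<bar> * \<bar>y - z\<bar> + 5 * Uz * Uz * \<bar>y - z\<bar> / m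
      + 4 * Uz * \<bar>y - z\<bar> * Jabs y / m + Jsq y / (m * m * m)"
proof -
  define d where "d = \<bar>y - z\<bar>"
  have d: "d > 0" using y unfolding d_def by auto
  have hq: "\<bar>q y\<bar> \<le> 1 / (m * d)" using hq' d m_pos unfolding d_def[symmetric] by (simp add: field_simps)
  have t1: "\<bar>Ccoef y * u y * u y\<bar> \<le> (12 + 10 * (1 / (m * d))) * (Uz * d) * (Uz * d)"
    using Ccoef_bound[of y] hq hu unfolding d_def[symmetric] by (intro abs_mult_le_mult) auto
  have t1': "(12 + 10 * (1 / (m * d))) * (Uz * d) * (Uz * d) = 12 * Uz * Uz * d * d + 10 * Uz * Uz * d / m"
    using d m_pos by (simp add: field_simps)
  have t2: "\<bar>r y * u y * w y\<bar> \<le> 2 * (Uz * d) * (Jabs y / m)"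
    using hu unfolding d_def[symmetric] by (intro abs_mult_le_mult r_bound hw)
  have t3: "\<bar>q y * w y * w y\<bar> \<le> 1 / (m * d) * (Jabs y / m) * (Jabs y / m)"
    by (intro abs_mult_le_mult hq hw)
  have "1 / (m * d) * (Jabs y / m) * (Jabs y / m) = (Jabs y)\<^sup>2 / d / (m * m * m)"
    using d m_pos by (simp add: field_simps power2_eq_square)
  also have "\<dots> \<le> (d * Jsq y) / d / (m * m * m)"
    using Jabs_square_le[of y] d m_pos unfolding d_def[symmetric] by (intro divide_right_mono) auto
  also have "\<dots> = Jsq y / (m * m * m)" using d by simp
  finally have t3': "1 / (m * d) * (Jabs y / m) * (Jabs y / m) \<le> Jsq y / (m * m * m)" .
  have "\<bar>Mbdry y\<bar> \<le> 1 / 2 * \<bar>Ccoef y * u y * u y\<bar> + 2 * \<bar>r y * u y * w y\<bar> + \<bar>q y * w y * w y\<bar>"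
    unfolding Mbdry_def by linarith
  moreover have "1 / 2 * (12 * Uz * Uz * d * d + 10 * Uz * Uz * d / m) = 6 * Uz * Uz * d * d + 5 * Uz * Uz * d / m"
    by simp
  moreover have "2 * (2 * (Uz * d) * (Jabs y / m)) = 4 * Uz * d * Jabs y / m" by simp
  ultimately show ?thesis unfolding d_def[symmetric] using t1 t1' t2 t3 t3' by linarith
qed

lemma Mbdry_lim: "(Mbdry \<longlongrightarrow> 0) (at z)"
proof (rule Lim_null_comparison)
  show "eventually (\<lambda>y. norm (Mbdry y) \<le> 6 * Uz * Uz * \<bar>y - z\<bar> * \<bar>y - z\<bar> + 5 * Uz * Uz * \<bar>y - z\<bar> / m
      + 4 * Uz * \<bar>y - z\<bar> * Jabs y / m + Jsq y / (m * m * m)) (at z)"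
    using near_crit by eventually_elim (simp add: Mbdry_le)
  have "((\<lambda>y. 6 * Uz * Uz * \<bar>y - z\<bar> * \<bar>y - z\<bar> + 5 * Uz * Uz * \<bar>y - z\<bar> / m
      + 4 * Uz * \<bar>y - z\<bar> * Jabs y / m + Jsq y / (m * m * m))
      \<longlongrightarrow> 6 * Uz * Uz * 0 * 0 + 5 * Uz * Uz * 0 / m + 4 * Uz * 0 * 0 / m + 0 / (m * m * m)) (at z)"
    by (intro tendsto_intros dist_lim Jabs_lim Jsq_lim) (use m_pos in auto)
  then show "((\<lambda>y. 6 * Uz * Uz * \<bar>y - z\<bar> * \<bar>y - z\<bar> + 5 * Uz * Uz * \<bar>y - z\<bar> / m
      + 4 * Uz * \<bar>y - z\<bar> * Jabs y / m + Jsq y / (m * m * m)) \<longlongrightarrow> 0) (at z)" by simp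
qed

lemma w_z: "w z = 0" unfolding w_def using pz by simp

lemma w_isCont_crit: "isCont w z"
  using w_lim w_z by (simp add: continuous_at)

end


lemma Mdens_int: "Mdens integrable_on {c..d}"
  by (rule integrable_on_subinterval[OF set_lebesgue_integral_eq_integral(1)[OF Mdens_absint]]) simp
lemma Ldens_int: "Ldens integrable_on {c..d}"
  by (rule integrable_on_subinterval[OF set_lebesgue_integral_eq_integral(1)[OF Ldens_absint]]) simp

lemma Mdens_w_nonneg: "0 \<le> Mdens_w x" unfolding Mdens_w_def by simp

lemma Mdens_w_has_integral_crit_interval: "(Mdens_w has_integral integral {crit n..crit (n + 1)} Mdens) {crit n..crit (n + 1)}"
proof (rule has_integral_by_vanishing_boundary_terms[OF crit_lt])
  fix \<alpha> \<beta> assume h: "crit n < \<alpha>" "\<alpha> \<le> \<beta>" "\<beta> < crit (n + 1)"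
  show "((\<lambda>x. Mdens_w x - Mdens x) has_integral Mbdry \<beta> - Mbdry \<alpha>) {\<alpha>..\<beta>}"
  proof -
    have sub: "{\<alpha>..\<beta>} \<subseteq> {crit n<..<crit (n + 1)}" using h by auto
    show ?thesis by (rule ac_primitive_onD(2)[OF ac_Mbdry[OF p_piece] h(2) sub])
  qed
qed (auto intro: Mdens_w_nonneg Mdens_int Mbdry_lim p_crit)

lemma w_square_has_integral_crit_interval: "((\<lambda>x. (w x)\<^sup>2) has_integral integral {crit n..crit (n + 1)} Ldens) {crit n..crit (n + 1)}"
proof (rule has_integral_by_vanishing_boundary_terms[OF crit_lt])
  fix \<alpha> \<beta> assume h: "crit n < \<alpha>" "\<alpha> \<le> \<beta>" "\<beta> < crit (n + 1)"
  show "((\<lambda>x. (w x)\<^sup>2 - Ldens x) has_integral Lbdry \<beta> - Lbdry \<alpha>) {\<alpha>..\<beta>}"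
  proof -
    have sub: "{\<alpha>..\<beta>} \<subseteq> {crit n<..<crit (n + 1)}" using h by auto
    show ?thesis by (rule ac_primitive_onD(2)[OF ac_Lbdry[OF p_piece] h(2) sub])
  qed
qed (auto intro: Ldens_int Lbdry_lim p_crit)

lemma Mdens_w_has_integral: "(Mdens_w has_integral integral UNIV Mdens) UNIV"
  by (rule has_integral_UNIV_from_crit_intervals[OF Mdens_w_has_integral_crit_interval Mdens_absint Mdens_w_nonneg])

lemma w_square_has_integral: "((\<lambda>x. (w x)\<^sup>2) has_integral integral UNIV Ldens) UNIV"
  by (rule has_integral_UNIV_from_crit_intervals[OF w_square_has_integral_crit_interval Ldens_absint]) simp

lemma w_continuous: "continuous_on UNIV w"
proof (intro continuous_at_imp_continuous_on ballI)
  fix x :: real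
  show "isCont w x"
  proof (cases "p x = 0")
    case True then show ?thesis by (rule w_isCont_crit)
  next
    case False
    obtain n where n: "crit n \<le> x" "x < crit (n + 1)" using crit_cover by blast
    have "x \<noteq> crit n" using False p_crit by auto
    then have xS: "x \<in> {crit n<..<crit (n + 1)}" using n by auto
    have "continuous_on {crit n<..<crit (n + 1)} w" by (rule ac_primitive_on_continuous[OF ac_w[OF p_piece]])
    then show "isCont w x" using xS continuous_on_interior by fastforce
  qed
qed

lemma Mdens_w_int: "Mdens_w integrable_on UNIV" using Mdens_w_has_integral by blast

lemma w1_square_int: "(\<lambda>x. (w1 x)\<^sup>2) integrable_on UNIV"
proof (rule set_lebesgue_integral_eq_integral(1), rule absolutely_integrable_if_abs_le[OF _ Mdens_w_int])
  fix x show "\<bar>(w1 x)\<^sup>2\<bar> \<le> Mdens_w x" unfolding Mdens_w_def by simp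
qed (auto)

lemma u0_w_div_p_square_int: "(\<lambda>x. (u0 E x * w x / p x)\<^sup>2) integrable_on UNIV"
proof (rule set_lebesgue_integral_eq_integral(1), rule absolutely_integrable_if_abs_le)
  show "(\<lambda>x. Mdens_w x / (2 * E\<^sup>2)) integrable_on UNIV" using Mdens_w_int by (rule integrable_on_divide)
  fix x
  have "2 * E\<^sup>2 * (u0 E x * w x / p x)\<^sup>2 \<le> Mdens_w x" unfolding Mdens_w_def by simp
  then show "\<bar>(u0 E x * w x / p x)\<^sup>2\<bar> \<le> Mdens_w x / (2 * E\<^sup>2)" using E0 by (simp add: field_simps)
qed auto

lemma w_square_int: "(\<lambda>x. (w x)\<^sup>2) integrable_on UNIV" using w_square_has_integral by blast

lemma w1_absint: "w1 absolutely_integrable_on {c..d}"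
  by (rule square_integrable_on_imp_absolutely_integrable[OF meas_w1 integrable_on_subinterval[OF w1_square_int]]) simp

lemma w1_int: "w1 integrable_on {c..d}" by (rule set_lebesgue_integral_eq_integral(1)[OF w1_absint])

lemma w_has_integral_crit_interval:
  assumes "crit n \<le> \<alpha>" "\<alpha> \<le> \<beta>" "\<beta> \<le> crit (n + 1)"
  shows "(w1 has_integral w \<beta> - w \<alpha>) {\<alpha>..\<beta>}"
proof (cases "\<alpha> = \<beta>")
  case False
  then have "\<alpha> < \<beta>" using assms by simp
  moreover have "{\<alpha><..<\<beta>} \<subseteq> {crit n<..<crit (n + 1)}" using assms by auto
  with ac_w[OF p_piece[of _ n]] have "ac_primitive_on {\<alpha><..<\<beta>} w w1"
    by (rule ac_primitive_on_subset)
  ultimately show ?thesis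
    using continuous_on_subset[OF w_continuous] w1_int
    by (intro has_integral_ac_primitive_closure) auto
qed (simp add: has_integral_refl)

lemma w_has_integral: "a \<le> b \<Longrightarrow> (w1 has_integral w b - w a) {a..b}"
  by (rule has_integral_from_crit_intervals[OF w_has_integral_crit_interval])

lemma w_H1: "H1_with_deriv w w1"
  unfolding H1_with_deriv_def square_integrable_def measurable_on_UNIV_iff_borel_measurable
  using w_continuous w_has_integral w_square_int w1_square_int by (auto intro: meas_w meas_w1)

text \<open>Near the zeros of \<open>p\<close> the wave \<open>u0\<close> is bounded away from zero, so the weighted
  \<open>L\<^sup>2\<close>-norm of \<open>u0 w / p\<close> controls \<open>w / p\<close> there; elsewhere \<open>p\<close> is bounded away from zero.\<close>

lemma div_p_square_le:
  "(v / p x)\<^sup>2 \<le> v\<^sup>2 / (E * (1 - E) / 2) + (u0 E x * v / p x)\<^sup>2 / ((1 - E) / 2)"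
proof -
  define e0 where "e0 = E * (1 - E) / 2"
  have e0: "e0 > 0" unfolding e0_def using E0 E1 by simp
  have c1: "(1 - E) / 2 > 0" using E1 by simp
  show ?thesis
  proof (cases "(p x)\<^sup>2 < e0")
    case True
    have "(1 - E) / 2 \<le> (u0 E x)\<^sup>2" using u0_sq_large True unfolding e0_def by blast
    then have "(v / p x)\<^sup>2 * ((1 - E) / 2) \<le> (v / p x)\<^sup>2 * (u0 E x)\<^sup>2"
      by (rule mult_left_mono) simp
    also have "\<dots> = (u0 E x * v / p x)\<^sup>2" by (simp add: power_mult_distrib power_divide)
    finally have "(v / p x)\<^sup>2 \<le> (u0 E x * v / p x)\<^sup>2 / ((1 - E) / 2)"
      using pos_le_divide_eq[OF c1] by blast
    moreover have "0 \<le> v\<^sup>2 / e0" using e0 by simp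
    ultimately show ?thesis unfolding e0_def by linarith
  next
    case False
    then have "v\<^sup>2 / (p x)\<^sup>2 \<le> v\<^sup>2 / e0"
      using e0 by (intro divide_left_mono) (auto intro!: mult_pos_pos)
    then have "(v / p x)\<^sup>2 \<le> v\<^sup>2 / e0" by (simp add: power_divide)
    moreover have "0 \<le> (u0 E x * v / p x)\<^sup>2 / ((1 - E) / 2)" using c1 by simp
    ultimately show ?thesis unfolding e0_def by linarith
  qed
qed

lemma w_div_p_square_integrable: "square_integrable (\<lambda>x. w x / p x)"
  unfolding square_integrable_def measurable_on_UNIV_iff_borel_measurable
proof
  show "(\<lambda>x. w x / p x) \<in> borel_measurable lebesgue" by measurable
  show "(\<lambda>x. (w x / p x)\<^sup>2) integrable_on UNIV"
  proof (rule set_lebesgue_integral_eq_integral(1), rule absolutely_integrable_if_abs_le)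
    show "(\<lambda>x. (w x)\<^sup>2 / (E * (1 - E) / 2) + (u0 E x * w x / p x)\<^sup>2 / ((1 - E) / 2)) integrable_on UNIV"
      by (intro integrable_add integrable_on_divide w_square_int u0_w_div_p_square_int)
  qed (use div_p_square_le in auto)
qed

lemma Kplus_form_eq:
  "Kplus_form E c u u1 u2 =
       integral UNIV (\<lambda>x. (w1 x)\<^sup>2) + (3 - c) * integral UNIV (\<lambda>x. (w x)\<^sup>2)
       + 2 * E\<^sup>2 * integral UNIV (\<lambda>x. (u0 E x * w x / p x)\<^sup>2)"
proof -
  have "Kplus_form E c u u1 u2 = integral UNIV Mdens - c * integral UNIV Ldens"
    unfolding Kplus_form_def Mdens_def[abs_def] Ldens_def[abs_def] ..
  also have "\<dots> = integral UNIV Mdens_w - c * integral UNIV (\<lambda>x. (w x)\<^sup>2)"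
    using integral_unique[OF Mdens_w_has_integral] integral_unique[OF w_square_has_integral] by simp
  also have "integral UNIV Mdens_w = integral UNIV (\<lambda>x. (w1 x)\<^sup>2) + 3 * integral UNIV (\<lambda>x. (w x)\<^sup>2)
       + 2 * E\<^sup>2 * integral UNIV (\<lambda>x. (u0 E x * w x / p x)\<^sup>2)"
    unfolding Mdens_w_def[abs_def]
    using w1_square_int w_square_int u0_w_div_p_square_int
    by (simp add: integral_add integrable_add integrable_on_mult_right)
  finally show ?thesis by (simp add: algebra_simps)
qed

end

theorem lemma4p2:
  fixes E c :: real and u u1 u2 :: "real \<Rightarrow> real"
  assumes "0 < E" and "E < 1"
    and "H2_with_derivs u u1 u2"
    and "\<forall>x. deriv (u0 E) x = 0 \<longrightarrow> u x = 0"
  shows "\<exists>w w1.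
     (\<forall>x. deriv (u0 E) x \<noteq> 0 \<longrightarrow>
            w x = u1 x - deriv (deriv (u0 E)) x / deriv (u0 E) x * u x)
   \<and> H1_with_deriv w w1
   \<and> square_integrable (\<lambda>x. w x / deriv (u0 E) x)
   \<and> Kplus_form E c u u1 u2 =
       integral UNIV (\<lambda>x. (w1 x)\<^sup>2) + (3 - c) * integral UNIV (\<lambda>x. (w x)\<^sup>2)
       + 2 * E\<^sup>2 * integral UNIV (\<lambda>x. (u0 E x * w x / deriv (u0 E) x)\<^sup>2)"
proof -
  interpret sn_wave E using assms(1,2) by unfold_locales
  interpret sn_wave_H2 E u u1 u2
    using assms(3,4) by unfold_locales (auto simp: deriv_u0)
  have "\<forall>x. p x \<noteq> 0 \<longrightarrow> w x = u1 x - dp x / p x * u x" by (simp add: w_def q_def)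
  then show ?thesis
    unfolding deriv_u0 deriv_p using w_H1 w_div_p_square_integrable Kplus_form_eq by blast
qed

end
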